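(* Let $M \geq 1$ and let $f \colon (\mathbb{W},d_{\mathrm{par}}) \to (\mathbb{H},d)$ be an $M$-bilipschitz map. For any $\epsilon \in (0,1]$ and $C \geq 1$ there exists a constant $C' = C'(C,\epsilon,M)$ such that $$\sum_{Q \in \mathcal{B}(C,\epsilon),\ Q \subset Q_{0}} \ell(Q)^{3} \leq C'\ell(Q_{0})^{3} \quad \text{for all } Q_{0} \in \mathcal{D},$$ where $\mathcal{B}(C,\epsilon) = \{Q \in \mathcal{D} : \rho_{f}(CQ) \geq \epsilon\}$.
   Context: $\mathbb{H}$ is $\mathbb{R}^{3}$ with group law $(x_{1},y_{1},t_{1}) \cdot (x_{2},y_{2},t_{2}) = (x_{1}+x_{2},y_{1}+y_{2},t_{1}+t_{2}+\tfrac{1}{2}(x_{1}y_{2}-x_{2}y_{1}))$, metric $d(p,q) = \|q^{-1}\cdot p\|$ with $\|(x,y,t)\| = \max\{\sqrt{x^{2}+y^{2}},\sqrt{|t|}\}$, and $N(E,\delta) = \{p : \operatorname{dist}(p,E) \leq \delta\}$. A horizontal line in $\mathbb{H}$ is a set $p \cdot \{(sa,sb,0) : s \in \mathbb{R}\}$ with $p \in \mathbb{H}$, $(a,b) \neq 0$. $\mathbb{W}$ is $\mathbb{R}^{2}$ with $d_{\mathrm{par}}((y,t),(\xi,\tau)) = \max\{|y-\xi|,|t-\tau|^{1/2}\}$; horizontal lines in $\mathbb{W}$ are the sets $\mathbb{R} \times \{t\}$; $B(w,r)$ is the closed $d_{\mathrm{par}}$-ball. The ruler coefficient $\rho_{f}(B(w,r))$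 is the infimum of $\rho > 0$ such that for every horizontal line $\ell \subset \mathbb{W}$ there is a horizontal line $L \subset \mathbb{H}$ with $f(\ell \cap B(w,r)) \subset N(L,\rho r)$. $\mathcal{D}$ is the family of dyadic parabolic rectangles $Q = [k2^{-n},(k+1)2^{-n}) \times [l4^{-n},(l+1)4^{-n})$, $\ell(Q) = 2^{-n}$, $c_{Q}$ its centre, and $CQ := B(c_{Q},C\ell(Q))$. *)

theory Defs
  imports "HOL-Analysis.Analysis"
begin

type_synonym heis = "real \<times> real \<times> real"

definition hmult :: "heis \<Rightarrow> heis \<Rightarrow> heis" where
  "hmult p q = (case p of (x1, y1, t1) \<Rightarrow> case q of (x2, y2, t2) \<Rightarrow>
     (x1 + x2, y1 + y2, t1 + t2 + (x1 * y2 - x2 * y1) / 2))"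

definition hinv :: "heis \<Rightarrow> heis" where
  "hinv p = (case p of (x, y, t) \<Rightarrow> (-x, -y, -t))"

definition hnorm :: "heis \<Rightarrow> real" where
  "hnorm p = (case p of (x, y, t) \<Rightarrow> max (sqrt (x^2 + y^2)) (sqrt \<bar>t\<bar>))"

definition hdist :: "heis \<Rightarrow> heis \<Rightarrow> real" where
  "hdist p q = hnorm (hmult (hinv q) p)"

definition hdist_set :: "heis \<Rightarrow> heis set \<Rightarrow> real" where
  "hdist_set p E = Inf (hdist p ` E)"

definition hnbhd :: "heis set \<Rightarrow> real \<Rightarrow> heis set" where
  "hnbhd E \<delta> = {p. hdist_set p E \<le> \<delta>}"

definition horizontal_line_H :: "heis set \<Rightarrow> bool" where
  "horizontal_line_H L \<longleftrightarrow> (\<exists>p a b. (a, b) \<noteq> (0, 0) \<and>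
      L = {hmult p (s * a, s * b, 0) | s. True})"

type_synonym wpt = "real \<times> real"

definition dpar :: "wpt \<Rightarrow> wpt \<Rightarrow> real" where
  "dpar w v = (case w of (y, t) \<Rightarrow> case v of (\<xi>, \<tau>) \<Rightarrow>
     max \<bar>y - \<xi>\<bar> (sqrt \<bar>t - \<tau>\<bar>))"

definition horizontal_line_W :: "wpt set \<Rightarrow> bool" where
  "horizontal_line_W hl \<longleftrightarrow> (\<exists>t. hl = UNIV \<times> {t})"

definition pball :: "wpt \<Rightarrow> real \<Rightarrow> wpt set" where
  "pball w r = {v. dpar w v \<le> r}"

definition ruler_coeff :: "(wpt \<Rightarrow> heis) \<Rightarrow> wpt \<Rightarrow> real \<Rightarrow> real" where
  "ruler_coeff f w r = Inf {\<rho>. \<rho> > 0 \<and> (\<forall>hl. horizontal_line_W hl \<longrightarrow>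
      (\<exists>L. horizontal_line_H L \<and> f ` (hl \<inter> pball w r) \<subseteq> hnbhd L (\<rho> * r)))}"

definition bilipschitz :: "real \<Rightarrow> (wpt \<Rightarrow> heis) \<Rightarrow> bool" where
  "bilipschitz M f \<longleftrightarrow> (\<forall>w v. dpar w v / M \<le> hdist (f w) (f v) \<and>
      hdist (f w) (f v) \<le> M * dpar w v)"

definition dyadic_rect :: "int \<Rightarrow> int \<Rightarrow> int \<Rightarrow> wpt set" where
  "dyadic_rect n k l = {(y, t). of_int k * 2 powi (-n) \<le> y \<and> y < of_int (k + 1) * 2 powi (-n)
      \<and> of_int l * 4 powi (-n) \<le> t \<and> t < of_int (l + 1) * 4 powi (-n)}"

definition dyadic :: "wpt set set" where
  "dyadic = {dyadic_rect n k l | n k l. True}"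

definition dyadic_index :: "wpt set \<Rightarrow> int \<times> int \<times> int" where
  "dyadic_index Q = (THE (n, k, l). Q = dyadic_rect n k l)"

definition side_len :: "wpt set \<Rightarrow> real" where
  "side_len Q = (case dyadic_index Q of (n, k, l) \<Rightarrow> 2 powi (-n))"

definition centre :: "wpt set \<Rightarrow> wpt" where
  "centre Q = (case dyadic_index Q of (n, k, l) \<Rightarrow>
     ((of_int k + 1/2) * 2 powi (-n), (of_int l + 1/2) * 4 powi (-n)))"

text \<open>CQ := B(c_Q, C l(Q)), represented by its centre and radius.\<close>

definition bad_set :: "(wpt \<Rightarrow> heis) \<Rightarrow> real \<Rightarrow> real \<Rightarrow> wpt set set" where
  "bad_set f C \<epsilon> = {Q \<in> dyadic. ruler_coeff f (centre Q) (C * side_len Q) \<ge> \<epsilon>}"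

end

theory Submission
  imports Defs
begin

text \<open>
  Fix a height \<open>t\<close>; the horizontal projection \<open>y \<mapsto> \<pi>(f(y, t))\<close> is an \<open>M\<close>-Lipschitz plane
  curve, and by the parallelogram law the squared second differences over all dyadic subintervals
  of an interval of length \<open>H\<close>, weighted by their lengths, sum to at most \<open>M\<^sup>2 H\<close>. If the first
  \<open>N\<close> levels of second differences on an interval are small, the curve stays close to a chord,
  and since the vertical gap to the horizontal lift of that chord is a swept area, \<open>f\<close> itself
  stays close to a horizontal line. So a rectangle \<open>Q\<close> with \<open>\<rho>\<^sub>f(CQ) \<ge> \<epsilon>\<close> has, at some height
  near its centre and on one of two dyadic grids shifted by a third, a second difference above
  a fixed \<open>\<theta>\<close> at a scale comparable to \<open>l(Q)\<close>. As \<open>f\<close> is \<open>1/2\<close>-Hoelder in \<open>t\<close>, this persists on a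
  time window of length \<open>\<approx> l(Q)\<^sup>2\<close>, so \<open>l(Q)\<^sup>3\<close> is bounded by a time integral of that squared
  second difference. At each time, boundedly many rectangles charge the same dyadic interval,
  and integrating the Pythagoras bound over the time span of \<open>Q\<^sub>0\<close> yields \<open>C' l(Q\<^sub>0)\<^sup>3\<close>.
\<close>

section \<open>Horizontal projection and vertical gap in the Heisenberg group\<close>

definition hproj :: "heis \<Rightarrow> complex" where
  "hproj p = Complex (fst p) (fst (snd p))"

definition vgap :: "heis \<Rightarrow> heis \<Rightarrow> real" where
  "vgap p q = snd (snd (hmult (hinv p) q))"

lemma vgap_eq: "vgap p q = snd (snd q) - snd (snd p) - Im (cnj (hproj p) * hproj q) / 2"
proof -
  obtain x y t x' y' t' where "p = (x, y, t)" "q = (x', y', t')" by (cases p, cases q) auto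
  then show ?thesis by (simp add: vgap_def hmult_def hinv_def hproj_def field_simps)
qed

lemma hdist_eq: "hdist q p = max (cmod (hproj q - hproj p)) (sqrt \<bar>vgap p q\<bar>)"
proof -
  obtain x y t x' y' t' where "p = (x, y, t)" "q = (x', y', t')" by (cases p, cases q) auto
  then show ?thesis
    by (simp add: hdist_def hnorm_def vgap_def hmult_def hinv_def hproj_def complex_diff complex_norm)
qed

lemma hdist_nonneg: "0 \<le> hdist q p"
  by (simp add: hdist_eq le_max_iff_disj)

lemma norm_hproj_diff_le_hdist: "cmod (hproj q - hproj p) \<le> hdist q p"
  by (simp add: hdist_eq)

lemma abs_vgap_le_hdist_sq: "\<bar>vgap p q\<bar> \<le> (hdist q p)\<^sup>2"
proof -
  have "sqrt \<bar>vgap p q\<bar> \<le> hdist q p" by (simp add: hdist_eq)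
  then have "(sqrt \<bar>vgap p q\<bar>)\<^sup>2 \<le> (hdist q p)\<^sup>2" by (rule power_mono) simp
  then show ?thesis by simp
qed

lemma hdist_set_le: "q \<in> L \<Longrightarrow> hdist_set p L \<le> hdist p q"
  unfolding hdist_set_def by (rule cInf_lower) (auto intro: bdd_belowI[of _ 0] simp: hdist_nonneg)

lemma vgap_self [simp]: "vgap p p = 0"
  by (simp add: vgap_eq)

lemma vgap_chain:
  "vgap p r = vgap p q + vgap q r + Im (cnj (hproj q - hproj p) * (hproj r - hproj p)) / 2"
  by (simp add: vgap_eq field_simps)

lemma hproj_hmult_horizontal: "hproj (hmult p (x, y, 0)) = hproj p + Complex x y"
  by (cases p) (simp add: hproj_def hmult_def complex_eq_iff)

lemma vgap_hmult_horizontal: "vgap p (hmult p (x, y, 0)) = 0"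
  by (cases p) (simp add: vgap_def hmult_def hinv_def field_simps)

lemma unit_direction:
  fixes c :: complex
  obtains e where "cmod e = 1" "Im (cnj e * c) = 0"
proof (cases "c = 0")
  case False
  have "cnj (c / of_real (cmod c)) * c = of_real ((cmod c)\<^sup>2) / of_real (cmod c)"
    using complex_norm_square[of c] by (simp add: field_simps)
  then have "Im (cnj (c / of_real (cmod c)) * c) = 0"
    by (simp only: of_real_divide[symmetric] Im_complex_of_real)
  then show ?thesis using that[of "c / of_real (cmod c)"] False by (simp add: norm_divide)
qed (use that[of 1] in simp)

text \<open>For a unit vector \<open>e\<close>, \<open>line_coords e p0 q\<close> are the horizontal coordinates of \<open>q\<close> along
  (real part) and across (imaginary part) the horizontal line through \<open>p0\<close> in direction \<open>e\<close>;
  \<open>line_foot e p0 q\<close> is the point of that line above the orthogonal projection of \<open>q\<close>.\<close>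

definition line_coords :: "complex \<Rightarrow> heis \<Rightarrow> heis \<Rightarrow> complex" where
  "line_coords e p0 q = cnj e * (hproj q - hproj p0)"

definition hline :: "heis \<Rightarrow> complex \<Rightarrow> heis set" where
  "hline p0 e = {hmult p0 (s * Re e, s * Im e, 0) | s. True}"

definition line_foot :: "complex \<Rightarrow> heis \<Rightarrow> heis \<Rightarrow> heis" where
  "line_foot e p0 q = hmult p0 (Re (line_coords e p0 q) * Re e, Re (line_coords e p0 q) * Im e, 0)"

lemma horizontal_line_hline: "e \<noteq> 0 \<Longrightarrow> horizontal_line_H (hline p0 e)"
  unfolding horizontal_line_H_def hline_def using complex_eq_iff[of e 0]
  by (intro exI[of _ p0] exI conjI refl) auto

lemma line_foot_in_hline: "line_foot e p0 q \<in> hline p0 e"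
  by (auto simp: line_foot_def hline_def)

lemma cross_eq_line_coords:
  assumes "cmod e = 1"
  shows "Im (cnj (hproj q - hproj p0) * (hproj r - hproj p0))
    = Re (line_coords e p0 q) * Im (line_coords e p0 r) - Im (line_coords e p0 q) * Re (line_coords e p0 r)"
proof -
  have "cnj (line_coords e p0 q) * line_coords e p0 r
      = (e * cnj e) * (cnj (hproj q - hproj p0) * (hproj r - hproj p0))"
    by (simp add: line_coords_def algebra_simps)
  also have "e * cnj e = 1" using assms complex_norm_square[of e] by simp
  finally have "cnj (hproj q - hproj p0) * (hproj r - hproj p0) = cnj (line_coords e p0 q) * line_coords e p0 r"
    by simp
  then have "Im (cnj (hproj q - hproj p0) * (hproj r - hproj p0)) = Im (cnj (line_coords e p0 q) * line_coords e p0 r)"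
    by (rule arg_cong)
  then show ?thesis by simp
qed

lemma norm_line_coords_diff:
  "cmod e = 1 \<Longrightarrow> cmod (line_coords e p0 r - line_coords e p0 q) = cmod (hproj r - hproj q)"
  by (simp add: line_coords_def norm_mult right_diff_distrib[symmetric])

lemma hproj_line_foot: "hproj (line_foot e p0 q) = hproj p0 + of_real (Re (line_coords e p0 q)) * e"
  by (simp add: line_foot_def hproj_hmult_horizontal complex_eq_iff)

lemma norm_hproj_diff_line_foot:
  assumes e: "cmod e = 1"
  shows "cmod (hproj q - hproj (line_foot e p0 q)) = \<bar>Im (line_coords e p0 q)\<bar>"
proof -
  let ?z = "line_coords e p0 q"
  have "e * ?z = hproj q - hproj p0"
    using e complex_norm_square[of e] by (simp add: line_coords_def mult.assoc[symmetric])
  then have "hproj q - hproj (line_foot e p0 q) = e * (\<i> * of_real (Im ?z))"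
    by (simp add: hproj_line_foot algebra_simps complex_eq_iff)
  then show ?thesis by (simp add: norm_mult e)
qed

lemma vgap_line_foot:
  "vgap (line_foot e p0 q) q = vgap p0 q - Re (line_coords e p0 q) * Im (line_coords e p0 q) / 2"
proof -
  let ?z = "line_coords e p0 q"
  have "cnj (hproj (line_foot e p0 q) - hproj p0) * (hproj q - hproj p0) = of_real (Re ?z) * ?z"
    by (simp add: hproj_line_foot line_coords_def)
  then have "Im (cnj (hproj (line_foot e p0 q) - hproj p0) * (hproj q - hproj p0)) = Re ?z * Im ?z"
    by simp
  then show ?thesis
    using vgap_chain[of p0 q "line_foot e p0 q"] vgap_hmult_horizontal[of p0] by (simp add: line_foot_def)
qed

lemma vgap_line_foot_diff:
  assumes "cmod e = 1"
  shows "vgap (line_foot e p0 r) r - vgap (line_foot e p0 q) q = vgap q r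
    - (Im (line_coords e p0 r) + Im (line_coords e p0 q)) * (Re (line_coords e p0 r) - Re (line_coords e p0 q)) / 2"
  using vgap_chain[of p0 r q] unfolding vgap_line_foot cross_eq_line_coords[OF assms]
  by (simp add: field_simps)

lemma abs_diff_le_of_increments:
  fixes \<Phi> :: "real \<Rightarrow> real"
  assumes ab: "a \<le> b"
    and incr: "\<And>u v. a \<le> u \<Longrightarrow> u \<le> v \<Longrightarrow> v \<le> b \<Longrightarrow> \<bar>\<Phi> v - \<Phi> u\<bar> \<le> K * (v - u)\<^sup>2 + L * (v - u)"
  shows "\<bar>\<Phi> b - \<Phi> a\<bar> \<le> L * (b - a)"
proof -
  have subdivided: "\<bar>\<Phi> b - \<Phi> a\<bar> \<le> L * (b - a) + K * (b - a)\<^sup>2 / real n" if n: "n > 0" for n :: nat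
  proof -
    define h where "h = (b - a) / real n"
    define y where "y j = a + real j * h" for j :: nat
    have h: "0 \<le> h" "real n * h = b - a" using ab n by (simp_all add: h_def)
    have y_step: "a \<le> y j" "y j \<le> y (Suc j)" "y (Suc j) \<le> b" "y (Suc j) - y j = h" if "j < n" for j
    proof -
      have "real (Suc j) * h \<le> real n * h" using that h by (intro mult_right_mono) auto
      then show "a \<le> y j" "y j \<le> y (Suc j)" "y (Suc j) \<le> b" "y (Suc j) - y j = h"
        using h by (simp_all add: y_def algebra_simps)
    qed
    have "(\<Sum>j<n. \<Phi> (y (Suc j)) - \<Phi> (y j)) = \<Phi> (y n) - \<Phi> (y 0)"
      by (rule sum_lessThan_telescope)
    then have "\<Phi> b - \<Phi> a = (\<Sum>j<n. \<Phi> (y (Suc j)) - \<Phi> (y j))"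
      using h by (simp add: y_def)
    then have "\<bar>\<Phi> b - \<Phi> a\<bar> \<le> (\<Sum>j<n. \<bar>\<Phi> (y (Suc j)) - \<Phi> (y j)\<bar>)"
      by (simp add: sum_abs)
    also have "\<dots> \<le> (\<Sum>j<n. K * h\<^sup>2 + L * h)"
      using incr y_step by (intro sum_mono) (metis lessThan_iff)
    also have "\<dots> = L * (b - a) + K * (b - a)\<^sup>2 / real n"
      using n by (simp add: h_def power2_eq_square field_simps)
    finally show ?thesis .
  qed
  have "(\<lambda>n. L * (b - a) + K * (b - a)\<^sup>2 / real n) \<longlonglongrightarrow> L * (b - a)"
    using tendsto_add[OF tendsto_const lim_const_over_n] by simp
  then show ?thesis
  proof (rule LIMSEQ_le_const)
    show "\<exists>N. \<forall>n\<ge>N. \<bar>\<Phi> b - \<Phi> a\<bar> \<le> L * (b - a) + K * (b - a)\<^sup>2 / real n"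
      using subdivided by (intro exI[of _ 1]) simp
  qed
qed

text \<open>The vertical gap to the foot point changes like a swept area (\<open>vgap_line_foot_diff\<close>), at
  rate at most \<open>\<eta> M\<close> per unit of parameter; hence the square root.\<close>

lemma hdist_line_foot_le:
  fixes \<gamma> :: "real \<Rightarrow> heis"
  assumes lip: "\<And>u v. hdist (\<gamma> u) (\<gamma> v) \<le> M * \<bar>u - v\<bar>"
    and ax: "a \<le> x" and e: "cmod e = 1"
    and dev: "\<And>y. a \<le> y \<Longrightarrow> y \<le> x \<Longrightarrow> \<bar>Im (line_coords e (\<gamma> a) (\<gamma> y))\<bar> \<le> \<eta>"
  shows "hdist (\<gamma> x) (line_foot e (\<gamma> a) (\<gamma> x)) \<le> max \<eta> (sqrt (\<eta> * M * (x - a)))"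
proof -
  let ?Z = "\<lambda>u. line_coords e (\<gamma> a) (\<gamma> u)"
  define \<Phi> where "\<Phi> u = vgap (line_foot e (\<gamma> a) (\<gamma> u)) (\<gamma> u)" for u
  have incr: "\<bar>\<Phi> v - \<Phi> u\<bar> \<le> M\<^sup>2 * (v - u)\<^sup>2 + \<eta> * M * (v - u)" if "a \<le> u" "u \<le> v" "v \<le> x" for u v
  proof -
    have d: "hdist (\<gamma> v) (\<gamma> u) \<le> M * (v - u)" using lip[of v u] that by simp
    have "\<bar>vgap (\<gamma> u) (\<gamma> v)\<bar> \<le> (M * (v - u))\<^sup>2"
      using abs_vgap_le_hdist_sq d hdist_nonneg by (metis order_trans power_mono)
    moreover have "\<bar>(Im (?Z v) + Im (?Z u)) * (Re (?Z v) - Re (?Z u))\<bar> \<le> (2 * \<eta>) * (M * (v - u))"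
    proof -
      have "\<bar>Re (?Z v) - Re (?Z u)\<bar> \<le> cmod (?Z v - ?Z u)" by (metis abs_Re_le_cmod minus_complex.sel(1))
      also have "\<dots> = cmod (hproj (\<gamma> v) - hproj (\<gamma> u))" by (rule norm_line_coords_diff[OF e])
      also have "\<dots> \<le> M * (v - u)" using norm_hproj_diff_le_hdist d by (rule order_trans)
      finally show ?thesis
        unfolding abs_mult using dev[of u] dev[of v] that by (intro mult_mono) auto
    qed
    ultimately have "\<bar>\<Phi> v - \<Phi> u\<bar> \<le> (M * (v - u))\<^sup>2 + (2 * \<eta>) * (M * (v - u)) / 2"
      unfolding \<Phi>_def vgap_line_foot_diff[OF e] by linarith
    then show ?thesis by (simp add: power_mult_distrib)
  qed
  moreover have "\<Phi> a = 0" by (simp add: \<Phi>_def vgap_line_foot line_coords_def)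
  ultimately have "\<bar>\<Phi> x\<bar> \<le> \<eta> * M * (x - a)"
    using abs_diff_le_of_increments[OF ax incr] by simp
  then show ?thesis
    unfolding hdist_eq norm_hproj_diff_line_foot[OF e] \<Phi>_def[symmetric]
    using dev[of x] ax by (intro max.mono) simp_all
qed

section \<open>Second differences and the dyadic Pythagoras bound\<close>

definition second_diff :: "(real \<Rightarrow> complex) \<Rightarrow> real \<Rightarrow> real \<Rightarrow> real" where
  "second_diff g x h = cmod (g x + g (x + h) - 2 * g (x + h / 2)) / h"

definition chord :: "(real \<Rightarrow> complex) \<Rightarrow> real \<Rightarrow> real \<Rightarrow> real \<Rightarrow> complex" where
  "chord g a R y = g a + of_real ((y - a) / R) * (g (a + R) - g a)"

lemma second_diff_nonneg: "h > 0 \<Longrightarrow> 0 \<le> second_diff g x h"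
  by (simp add: second_diff_def)

lemma norm_second_diff: "h > 0 \<Longrightarrow> cmod (2 * g (x + h / 2) - g x - g (x + h)) = second_diff g x h * h"
  by (simp add: second_diff_def norm_minus_commute[of "2 * g (x + h / 2)"] algebra_simps)

lemma chord_left_half_diff:
  "chord g a (R / 2) y - chord g a R y = of_real ((y - a) / R) * (2 * g (a + R / 2) - g a - g (a + R))"
proof -
  have "\<And>(ga::complex) gm gb (s::real). ga + of_real (2 * s) * (gm - ga) - (ga + of_real s * (gb - ga))
      = of_real s * (2 * gm - ga - gb)"
    by (simp add: algebra_simps)
  moreover have "(y - a) / (R / 2) = 2 * ((y - a) / R)" by simp
  ultimately show ?thesis unfolding chord_def by metis
qed

lemma chord_right_half_diff:
  assumes "R > 0"
  shows "chord g (a + R / 2) (R / 2) y - chord g a R y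
    = of_real ((a + R - y) / R) * (2 * g (a + R / 2) - g a - g (a + R))"
proof -
  have "\<And>(ga::complex) gm gb (s::real). gm + of_real (2 * s - 1) * (gb - gm) - (ga + of_real s * (gb - ga))
      = of_real (1 - s) * (2 * gm - ga - gb)"
    by (simp add: algebra_simps)
  moreover have "(y - (a + R / 2)) / (R / 2) = 2 * ((y - a) / R) - 1" "(a + R - y) / R = 1 - (y - a) / R"
    using assms by (simp_all add: field_simps)
  moreover have "a + R / 2 + R / 2 = a + R" by simp
  ultimately show ?thesis unfolding chord_def by metis
qed

lemma norm_half_chord_diff_le:
  assumes R: "R > 0" and y: "a \<le> y" "y \<le> a + R"
  obtains j :: nat where "j < 2" "a + real j * R / 2 \<le> y" "y \<le> a + real j * R / 2 + R / 2"
    "cmod (chord g (a + real j * R / 2) (R / 2) y - chord g a R y) \<le> second_diff g a R * R / 2"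
proof (cases "y \<le> a + R / 2")
  case True
  have "cmod (chord g a (R / 2) y - chord g a R y) = \<bar>(y - a) / R\<bar> * cmod (2 * g (a + R / 2) - g a - g (a + R))"
    by (simp only: chord_left_half_diff norm_mult norm_of_real)
  also have "\<dots> = (y - a) / R * (second_diff g a R * R)"
    using R y by (simp add: norm_second_diff)
  also have "\<dots> \<le> 1 / 2 * (second_diff g a R * R)"
    using R y True second_diff_nonneg[OF R] by (intro mult_right_mono) (auto simp: field_simps)
  finally show ?thesis using that[of 0] y True by simp
next
  case False
  have "cmod (chord g (a + R / 2) (R / 2) y - chord g a R y)
      = \<bar>(a + R - y) / R\<bar> * cmod (2 * g (a + R / 2) - g a - g (a + R))"
    by (simp only: chord_right_half_diff[OF R] norm_mult norm_of_real)
  also have "\<dots> = (a + R - y) / R * (second_diff g a R * R)"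
    using R y by (simp add: norm_second_diff)
  also have "\<dots> \<le> 1 / 2 * (second_diff g a R * R)"
    using R y False second_diff_nonneg[OF R] by (intro mult_right_mono) (auto simp: field_simps)
  finally show ?thesis using that[of 1] y False by simp
qed

lemma norm_sub_chord_le_lipschitz:
  assumes lip: "M-lipschitz_on UNIV g" and R: "R > 0" and y: "a \<le> y" "y \<le> a + R"
  shows "cmod (g y - chord g a R y) \<le> 2 * M * R"
proof -
  have M: "0 \<le> M" using lip by (rule lipschitz_on_nonneg)
  have t: "0 \<le> (y - a) / R" "(y - a) / R \<le> 1" using R y by (auto simp: field_simps)
  have "g y - chord g a R y = (g y - g a) - of_real ((y - a) / R) * (g (a + R) - g a)"
    by (simp add: chord_def)
  then have "cmod (g y - chord g a R y) \<le> cmod (g y - g a) + (y - a) / R * cmod (g (a + R) - g a)"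
    by (metis norm_triangle_ineq4 norm_mult norm_of_real abs_of_nonneg t(1))
  also have "\<dots> \<le> M * R + 1 * (M * R)"
  proof (intro add_mono mult_mono)
    show "cmod (g y - g a) \<le> M * R"
      using lipschitz_on_normD[OF lip, of y a] mult_left_mono[of "\<bar>y - a\<bar>" R M] y M by auto
    show "cmod (g (a + R) - g a) \<le> M * R"
      using lipschitz_on_normD[OF lip, of "a + R" a] R by simp
  qed (use t M R in auto)
  finally show ?thesis by simp
qed

lemma norm_sub_chord_le:
  assumes lip: "M-lipschitz_on UNIV g" and \<theta>: "\<theta> \<ge> 0" and R: "R > 0"
    and flat: "\<And>d i. d < N \<Longrightarrow> i < 2 ^ d \<Longrightarrow> second_diff g (a + real i * R / 2 ^ d) (R / 2 ^ d) \<le> \<theta>"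
    and y: "a \<le> y" "y \<le> a + R"
  shows "cmod (g y - chord g a R y) \<le> \<theta> * R + 2 * M * R / 2 ^ N"
  using R flat y
proof (induction N arbitrary: a R)
  case 0
  have "cmod (g y - chord g a R y) \<le> 2 * M * R"
    using norm_sub_chord_le_lipschitz[OF lip "0"(1) "0"(3) "0"(4)] .
  moreover have "0 \<le> \<theta> * R" using \<theta> "0"(1) by simp
  ultimately show ?case by simp
next
  case (Suc N)
  obtain j :: nat where j: "j < 2" "a + real j * R / 2 \<le> y" "y \<le> a + real j * R / 2 + R / 2"
    and half: "cmod (chord g (a + real j * R / 2) (R / 2) y - chord g a R y) \<le> second_diff g a R * R / 2"
    using norm_half_chord_diff_le[OF Suc.prems(1,3,4)] by blast
  have flat_half: "second_diff g (a + real j * R / 2 + real i * (R / 2) / 2 ^ d) (R / 2 / 2 ^ d) \<le> \<theta>"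
    if "d < N" "i < 2 ^ d" for d i
  proof -
    have "j * 2 ^ d + i < 2 ^ Suc d" using j(1) that(2) by (cases j) auto
    then have "second_diff g (a + real (j * 2 ^ d + i) * R / 2 ^ Suc d) (R / 2 ^ Suc d) \<le> \<theta>"
      using Suc.prems(2)[of "Suc d" "j * 2 ^ d + i"] that(1) by simp
    moreover have "a + real (j * 2 ^ d + i) * R / 2 ^ Suc d = a + real j * R / 2 + real i * (R / 2) / 2 ^ d"
      by (simp add: field_simps)
    ultimately show ?thesis by (simp add: add.assoc)
  qed
  have "cmod (g y - chord g (a + real j * R / 2) (R / 2) y) \<le> \<theta> * (R / 2) + 2 * M * (R / 2) / 2 ^ N"
    using Suc.IH[OF _ flat_half j(2) j(3)] Suc.prems(1) by simp
  moreover have "cmod (chord g (a + real j * R / 2) (R / 2) y - chord g a R y) \<le> \<theta> * R / 2"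
  proof -
    have "second_diff g a R * R / 2 \<le> \<theta> * R / 2"
      using Suc.prems(1) Suc.prems(2)[of 0 0] by (simp add: mult_right_mono)
    then show ?thesis using half by linarith
  qed
  ultimately have "cmod (g y - chord g a R y) \<le> (\<theta> * (R / 2) + 2 * M * (R / 2) / 2 ^ N) + \<theta> * R / 2"
    by (rule norm_diff_triangle_le)
  then show ?case by (simp add: field_simps)
qed

lemma sum_lessThan_double:
  fixes f :: "nat \<Rightarrow> 'a::comm_monoid_add"
  shows "(\<Sum>i<2 * n. f i) = (\<Sum>i<n. f (2 * i) + f (2 * i + 1))"
  by (induction n) (simp_all add: ac_simps)

lemma parallelogram_law_cmod: "(cmod (u + v))\<^sup>2 + (cmod (u - v))\<^sup>2 = 2 * ((cmod u)\<^sup>2 + (cmod v)\<^sup>2)"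
  unfolding cmod_power2 by (simp add: power2_eq_square algebra_simps)

definition dyadic_energy :: "(real \<Rightarrow> complex) \<Rightarrow> real \<Rightarrow> real \<Rightarrow> nat \<Rightarrow> real" where
  "dyadic_energy g a H d =
    (\<Sum>i<2 ^ d. (cmod (g (a + real (Suc i) * H / 2 ^ d) - g (a + real i * H / 2 ^ d)))\<^sup>2 / (H / 2 ^ d))"

lemma energy_of_halves:
  assumes h: "h > 0"
  shows "(cmod (g (x + h / 2) - g x))\<^sup>2 / (h / 2) + (cmod (g (x + h) - g (x + h / 2)))\<^sup>2 / (h / 2)
    = (cmod (g (x + h) - g x))\<^sup>2 / h + (second_diff g x h)\<^sup>2 * h"
proof -
  define u where "u = g (x + h / 2) - g x"
  define v where "v = g (x + h) - g (x + h / 2)"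
  have "(cmod u)\<^sup>2 / (h / 2) + (cmod v)\<^sup>2 / (h / 2) = 2 * ((cmod u)\<^sup>2 + (cmod v)\<^sup>2) / h"
    using h by (simp add: field_simps)
  also have "\<dots> = ((cmod (u + v))\<^sup>2 + (cmod (u - v))\<^sup>2) / h"
    by (simp only: parallelogram_law_cmod)
  also have "u + v = g (x + h) - g x" by (simp add: u_def v_def)
  also have "cmod (u - v) = second_diff g x h * h"
    using norm_second_diff[OF h, of g x] by (simp add: u_def v_def algebra_simps)
  finally show ?thesis
    using h unfolding u_def v_def by (simp add: power_mult_distrib add_divide_distrib power2_eq_square)
qed

lemma dyadic_energy_Suc:
  assumes H: "H > 0"
  shows "dyadic_energy g a H (Suc d) = dyadic_energy g a H d
    + (\<Sum>i<2 ^ d. (second_diff g (a + real i * H / 2 ^ d) (H / 2 ^ d))\<^sup>2 * (H / 2 ^ d))"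
proof -
  define E where "E D i = (cmod (g (a + real (Suc i) * H / 2 ^ D) - g (a + real i * H / 2 ^ D)))\<^sup>2 / (H / 2 ^ D)"
    for D i :: nat
  have E_sum: "dyadic_energy g a H D = (\<Sum>i<2 ^ D. E D i)" for D
    by (simp add: dyadic_energy_def E_def)
  have pair: "E (Suc d) (2 * i) + E (Suc d) (2 * i + 1)
      = E d i + (second_diff g (a + real i * H / 2 ^ d) (H / 2 ^ d))\<^sup>2 * (H / 2 ^ d)" for i
  proof -
    define x where "x = a + real i * H / 2 ^ d"
    define h where "h = H / 2 ^ d"
    have h: "h > 0" using H by (simp add: h_def)
    have eqs: "a + real (2 * i) * H / 2 ^ Suc d = x" "a + real (Suc (2 * i)) * H / 2 ^ Suc d = x + h / 2"
      "a + real (2 * i + 1) * H / 2 ^ Suc d = x + h / 2" "a + real (Suc (2 * i + 1)) * H / 2 ^ Suc d = x + h"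
      "a + real (Suc i) * H / 2 ^ d = x + h" "H / 2 ^ Suc d = h / 2"
      by (simp_all add: x_def h_def field_simps)
    show ?thesis
      unfolding E_def eqs x_def[symmetric] h_def[symmetric] by (rule energy_of_halves[OF h])
  qed
  have "dyadic_energy g a H (Suc d) = (\<Sum>i<2 ^ d. E (Suc d) (2 * i) + E (Suc d) (2 * i + 1))"
    using sum_lessThan_double[of "E (Suc d)" "2 ^ d"] by (simp add: E_sum)
  also have "\<dots> = (\<Sum>i<2 ^ d. E d i + (second_diff g (a + real i * H / 2 ^ d) (H / 2 ^ d))\<^sup>2 * (H / 2 ^ d))"
    by (rule sum.cong[OF refl pair])
  finally show ?thesis by (simp add: E_sum sum.distrib)
qed

lemma dyadic_energy_le:
  assumes lip: "M-lipschitz_on UNIV g" and H: "H > 0"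
  shows "dyadic_energy g a H d \<le> M\<^sup>2 * H"
proof -
  let ?h = "H / 2 ^ d"
  have h: "?h > 0" using H by simp
  have "(cmod (g (a + real (Suc i) * H / 2 ^ d) - g (a + real i * H / 2 ^ d)))\<^sup>2 / ?h \<le> M\<^sup>2 * ?h" for i
  proof -
    have "cmod (g (a + real (Suc i) * H / 2 ^ d) - g (a + real i * H / 2 ^ d)) \<le> M * ?h"
      using lipschitz_on_normD[OF lip, of "a + real (Suc i) * H / 2 ^ d" "a + real i * H / 2 ^ d"] h
      by (simp add: field_simps)
    then have "(cmod (g (a + real (Suc i) * H / 2 ^ d) - g (a + real i * H / 2 ^ d)))\<^sup>2 \<le> (M * ?h)\<^sup>2"
      by (rule power_mono) simp
    then show ?thesis using h by (simp add: power2_eq_square field_simps)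
  qed
  then have "dyadic_energy g a H d \<le> (\<Sum>i<(2::nat) ^ d. M\<^sup>2 * ?h)"
    unfolding dyadic_energy_def by (intro sum_mono)
  also have "\<dots> = M\<^sup>2 * H" by simp
  finally show ?thesis .
qed

lemma sum_second_diff_sq_le:
  assumes lip: "M-lipschitz_on UNIV g" and H: "H > 0"
  shows "(\<Sum>d<D. \<Sum>i<2 ^ d. (second_diff g (a + real i * H / 2 ^ d) (H / 2 ^ d))\<^sup>2 * (H / 2 ^ d)) \<le> M\<^sup>2 * H"
proof -
  have "(\<Sum>d<D. \<Sum>i<2 ^ d. (second_diff g (a + real i * H / 2 ^ d) (H / 2 ^ d))\<^sup>2 * (H / 2 ^ d))
      = dyadic_energy g a H D - dyadic_energy g a H 0"
    by (induction D) (simp_all add: dyadic_energy_Suc[OF H])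
  moreover have "dyadic_energy g a H 0 \<ge> 0" using H by (simp add: dyadic_energy_def)
  ultimately show ?thesis using dyadic_energy_le[OF lip H, of a D] by linarith
qed

section \<open>Dyadic parabolic rectangles\<close>

definition dyadic_scale :: "int \<Rightarrow> real" where
  "dyadic_scale n = 2 powi (-n)"

lemma dyadic_scale_pos: "dyadic_scale n > 0"
  by (simp add: dyadic_scale_def)

lemma four_powi_eq_dyadic_scale_sq: "(4::real) powi (-n) = (dyadic_scale n)\<^sup>2"
proof -
  have "(4::real) powi (-n) = 2 powi ((-n) * int 2)"
    using power_int_power[of "2::real" 2 "-n"] by (simp add: mult.commute)
  also have "\<dots> = (dyadic_scale n)\<^sup>2"
    by (simp only: power_int_mult power_int_of_nat dyadic_scale_def)
  finally show ?thesis .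
qed

lemma four_power_eq: "(4::real) ^ k = (2 ^ k)\<^sup>2"
  by (simp add: power2_eq_square power_mult_distrib[symmetric])

lemma dyadic_rect_eq:
  "dyadic_rect n k l = {of_int k * dyadic_scale n ..< of_int (k + 1) * dyadic_scale n}
     \<times> {of_int l * (dyadic_scale n)\<^sup>2 ..< of_int (l + 1) * (dyadic_scale n)\<^sup>2}"
  unfolding dyadic_rect_def four_powi_eq_dyadic_scale_sq dyadic_scale_def[symmetric] by auto

lemma dyadic_scale_less_iff: "dyadic_scale n' < dyadic_scale n \<longleftrightarrow> n < n'"
proof
  assume "n < n'"
  then show "dyadic_scale n' < dyadic_scale n"
    unfolding dyadic_scale_def by (intro power_int_strict_increasing) simp_all
next
  assume less: "dyadic_scale n' < dyadic_scale n"
  show "n < n'"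
  proof (rule ccontr)
    assume "\<not> n < n'"
    then have "(2::real) powi (-n) \<le> 2 powi (-n')" by (intro power_int_increasing) simp_all
    with less show False by (simp add: dyadic_scale_def)
  qed
qed

lemma dyadic_scale_le_iff: "dyadic_scale n' \<le> dyadic_scale n \<longleftrightarrow> n \<le> n'"
  by (meson dyadic_scale_less_iff not_le)

lemma dyadic_scale_inject: "dyadic_scale n = dyadic_scale n' \<longleftrightarrow> n = n'"
proof
  assume "dyadic_scale n = dyadic_scale n'"
  then have "dyadic_scale n' \<le> dyadic_scale n" "dyadic_scale n \<le> dyadic_scale n'" by simp_all
  then show "n = n'" unfolding dyadic_scale_le_iff by simp
qed simp

lemma dyadic_scale_diff:
  assumes "n0 \<le> n"
  shows "dyadic_scale n = dyadic_scale n0 / 2 ^ nat (n - n0)"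
proof -
  have "dyadic_scale n0 = 2 powi (-n + (n - n0))" by (simp add: dyadic_scale_def)
  also have "\<dots> = 2 powi (-n) * 2 powi (n - n0)" by (rule power_int_add) simp
  also have "(2::real) powi (n - n0) = 2 ^ nat (n - n0)"
    using assms by (metis int_nat_eq power_int_of_nat diff_ge_0_iff_ge)
  finally show ?thesis by (simp add: dyadic_scale_def)
qed

lemma dyadic_rect_inject:
  assumes "dyadic_rect n k l = dyadic_rect n' k' l'"
  shows "n = n' \<and> k = k' \<and> l = l'"
proof -
  let ?r = "dyadic_scale n" and ?r' = "dyadic_scale n'"
  have pos: "?r > 0" "?r' > 0" by (simp_all add: dyadic_scale_pos)
  then have ne: "of_int k * ?r < of_int (k + 1) * ?r" "of_int l * ?r\<^sup>2 < of_int (l + 1) * ?r\<^sup>2"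
    "of_int k' * ?r' < of_int (k' + 1) * ?r'" "of_int l' * ?r'\<^sup>2 < of_int (l' + 1) * ?r'\<^sup>2"
    by (simp_all add: algebra_simps)
  have "{of_int k * ?r ..< of_int (k + 1) * ?r} = {of_int k' * ?r' ..< of_int (k' + 1) * ?r'}"
    "{of_int l * ?r\<^sup>2 ..< of_int (l + 1) * ?r\<^sup>2} = {of_int l' * ?r'\<^sup>2 ..< of_int (l' + 1) * ?r'\<^sup>2}"
    using assms ne unfolding dyadic_rect_eq times_eq_iff by auto
  then have k: "of_int k * ?r = of_int k' * ?r'" "of_int (k + 1) * ?r = of_int (k' + 1) * ?r'"
    and l: "of_int l * ?r\<^sup>2 = of_int l' * ?r'\<^sup>2"
    using atLeastLessThan_inj ne by blast+
  have "?r = ?r'" using k by (simp add: algebra_simps)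
  then have "n = n'" by (simp add: dyadic_scale_inject)
  then show ?thesis using k(1) l pos by simp
qed

lemma dyadic_index_rect [simp]: "dyadic_index (dyadic_rect n k l) = (n, k, l)"
  unfolding dyadic_index_def by (rule the_equality) (auto dest: dyadic_rect_inject)

lemma side_len_rect [simp]: "side_len (dyadic_rect n k l) = dyadic_scale n"
  by (simp add: side_len_def dyadic_scale_def)

lemma centre_rect [simp]:
  "centre (dyadic_rect n k l) = ((of_int k + 1 / 2) * dyadic_scale n, (of_int l + 1 / 2) * (dyadic_scale n)\<^sup>2)"
  by (simp add: centre_def dyadic_scale_def[symmetric] four_powi_eq_dyadic_scale_sq)

lemma dyadicE:
  assumes "Q \<in> dyadic"
  obtains n k l where "Q = dyadic_rect n k l"
  using assms unfolding dyadic_def by auto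

lemma centre_in_dyadic_rect: "Q \<in> dyadic \<Longrightarrow> centre Q \<in> Q"
proof (elim dyadicE)
  fix n k l assume Q: "Q = dyadic_rect n k l"
  show "centre Q \<in> Q"
    unfolding Q centre_rect using dyadic_scale_pos[of n] by (simp add: dyadic_rect_eq algebra_simps)
qed

lemma dyadic_rect_subset_level:
  assumes sub: "dyadic_rect n k l \<subseteq> dyadic_rect n0 k0 l0"
  shows "n0 \<le> n"
proof (rule ccontr)
  let ?r = "dyadic_scale n" and ?R = "dyadic_scale n0"
  assume "\<not> n0 \<le> n"
  then have less: "?R < ?r" using dyadic_scale_less_iff[of n0 n] by linarith
  have in0: "of_int k0 * ?R \<le> y \<and> y < of_int (k0 + 1) * ?R"
    if "of_int k * ?r \<le> y" "y < of_int (k + 1) * ?r" for y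
  proof -
    have "(y, of_int l * ?r\<^sup>2) \<in> dyadic_rect n k l"
      using that dyadic_scale_pos[of n] by (simp add: dyadic_rect_eq algebra_simps)
    then have "(y, of_int l * ?r\<^sup>2) \<in> dyadic_rect n0 k0 l0" using sub by blast
    then show ?thesis by (simp add: dyadic_rect_eq)
  qed
  have "of_int k0 * ?R \<le> of_int k * ?r"
    using in0[of "of_int k * ?r"] dyadic_scale_pos[of n] by (simp add: algebra_simps)
  moreover have "of_int k * ?r + ?R < of_int (k0 + 1) * ?R"
    using in0[of "of_int k * ?r + ?R"] less dyadic_scale_pos[of n0] by (simp add: algebra_simps)
  ultimately show False by (simp add: algebra_simps)
qed

lemma finite_card_int_near:
  assumes "w \<ge> 0"
  shows "finite {k::int. \<bar>of_int k - c\<bar> \<le> w}" and "real (card {k::int. \<bar>of_int k - c\<bar> \<le> w}) \<le> 2 * w + 1"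
proof -
  have eq: "{k::int. \<bar>of_int k - c\<bar> \<le> w} = {\<lceil>c - w\<rceil>..\<lfloor>c + w\<rfloor>}"
    by (auto simp: abs_le_iff ceiling_le_iff le_floor_iff)
  show "finite {k::int. \<bar>of_int k - c\<bar> \<le> w}" unfolding eq by simp
  have bounds: "of_int \<lfloor>c + w\<rfloor> \<le> c + w" "c - w \<le> of_int \<lceil>c - w\<rceil>"
    by (rule of_int_floor_le, rule le_of_int_ceiling)
  show "real (card {k::int. \<bar>of_int k - c\<bar> \<le> w}) \<le> 2 * w + 1"
  proof (cases "\<lceil>c - w\<rceil> \<le> \<lfloor>c + w\<rfloor>")
    case True
    then have "real (card {k::int. \<bar>of_int k - c\<bar> \<le> w}) = of_int (\<lfloor>c + w\<rfloor> - \<lceil>c - w\<rceil> + 1)"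
      unfolding eq by simp
    then show ?thesis using bounds by linarith
  qed (use assms eq in simp)
qed

lemma finite_card_dyadic_rects_near:
  fixes n :: int and y t A B :: real
  assumes A: "A \<ge> 0" and B: "B \<ge> 0"
  defines "S \<equiv> {Q \<in> dyadic. side_len Q = dyadic_scale n
      \<and> \<bar>fst (centre Q) - y\<bar> \<le> A * dyadic_scale n \<and> \<bar>snd (centre Q) - t\<bar> \<le> B * (dyadic_scale n)\<^sup>2}"
  shows "finite S \<and> real (card S) \<le> (2 * A + 1) * (2 * B + 1)"
proof -
  let ?r = "dyadic_scale n"
  have r: "?r > 0" by (rule dyadic_scale_pos)
  define K where "K = {k::int. \<bar>of_int k - (y / ?r - 1 / 2)\<bar> \<le> A}"
  define L where "L = {l::int. \<bar>of_int l - (t / ?r\<^sup>2 - 1 / 2)\<bar> \<le> B}"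
  have sub: "S \<subseteq> (\<lambda>(k, l). dyadic_rect n k l) ` (K \<times> L)"
  proof
    fix Q assume "Q \<in> S"
    then obtain n' k l where Q: "Q = dyadic_rect n' k l" and side: "dyadic_scale n' = ?r"
      and near: "\<bar>(of_int k + 1 / 2) * ?r - y\<bar> \<le> A * ?r" "\<bar>(of_int l + 1 / 2) * ?r\<^sup>2 - t\<bar> \<le> B * ?r\<^sup>2"
      unfolding S_def by (auto elim!: dyadicE)
    have "\<bar>of_int k - (y / ?r - 1 / 2)\<bar> * ?r = \<bar>(of_int k + 1 / 2) * ?r - y\<bar>"
      using r by (simp add: abs_mult[symmetric] field_simps)
    then have "\<bar>of_int k - (y / ?r - 1 / 2)\<bar> * ?r \<le> A * ?r" using near(1) by simp
    then have "k \<in> K" using r unfolding K_def by (auto dest: mult_right_le_imp_le)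
    have "\<bar>of_int l - (t / ?r\<^sup>2 - 1 / 2)\<bar> * ?r\<^sup>2 = \<bar>(of_int l + 1 / 2) * ?r\<^sup>2 - t\<bar>"
      using r by (simp add: abs_mult[symmetric] field_simps)
    then have "\<bar>of_int l - (t / ?r\<^sup>2 - 1 / 2)\<bar> * ?r\<^sup>2 \<le> B * ?r\<^sup>2" using near(2) by simp
    then have "l \<in> L" using r unfolding L_def by (auto dest: mult_right_le_imp_le)
    show "Q \<in> (\<lambda>(k, l). dyadic_rect n k l) ` (K \<times> L)"
      using Q side \<open>k \<in> K\<close> \<open>l \<in> L\<close> by (auto simp: dyadic_scale_inject)
  qed
  have K: "finite K" "real (card K) \<le> 2 * A + 1" and L: "finite L" "real (card L) \<le> 2 * B + 1"
    unfolding K_def L_def using finite_card_int_near A B by auto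
  have fin: "finite ((\<lambda>(k, l). dyadic_rect n k l) ` (K \<times> L))" using K(1) L(1) by simp
  have "card S \<le> card ((\<lambda>(k, l). dyadic_rect n k l) ` (K \<times> L))" by (rule card_mono[OF fin sub])
  also have "\<dots> \<le> card (K \<times> L)" by (rule card_image_le) (simp add: K(1) L(1))
  also have "\<dots> = card K * card L" by (rule card_cartesian_product)
  finally have "real (card S) \<le> real (card K) * real (card L)" by (simp flip: of_nat_mult)
  also have "\<dots> \<le> (2 * A + 1) * (2 * B + 1)" using K(2) L(2) by (intro mult_mono) auto
  finally show ?thesis using finite_subset[OF sub fin] by simp
qed

definition hcurve :: "(wpt \<Rightarrow> heis) \<Rightarrow> real \<Rightarrow> real \<Rightarrow> complex" where
  "hcurve f t y = hproj (f (y, t))"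

lemma bilipschitz_hdist_le: "bilipschitz M f \<Longrightarrow> hdist (f w) (f v) \<le> M * dpar w v"
  unfolding bilipschitz_def by blast

lemma bilipschitz_nonneg:
  assumes "bilipschitz M f"
  shows "M \<ge> 0"
proof -
  have "0 \<le> hdist (f (1, 0)) (f (0, 0))" by (rule hdist_nonneg)
  also have "\<dots> \<le> M" using bilipschitz_hdist_le[OF assms, of "(1, 0)" "(0, 0)"] by (simp add: dpar_def)
  finally show ?thesis .
qed

lemma hdist_horizontal_le: "bilipschitz M f \<Longrightarrow> hdist (f (u, t)) (f (v, t)) \<le> M * \<bar>u - v\<bar>"
  using bilipschitz_hdist_le[of M f "(u, t)" "(v, t)"] by (simp add: dpar_def)

lemma lipschitz_hcurve:
  assumes bl: "bilipschitz M f"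
  shows "M-lipschitz_on UNIV (hcurve f t)"
proof (rule lipschitz_onI)
  fix u v
  have "dist (hcurve f t u) (hcurve f t v) \<le> hdist (f (u, t)) (f (v, t))"
    using norm_hproj_diff_le_hdist by (simp add: hcurve_def dist_norm)
  also have "\<dots> \<le> M * dist u v" using hdist_horizontal_le[OF bl] by (simp add: dist_real_def)
  finally show "dist (hcurve f t u) (hcurve f t v) \<le> M * dist u v" .
qed (rule bilipschitz_nonneg[OF bl])

lemma norm_hcurve_vertical_le:
  "bilipschitz M f \<Longrightarrow> cmod (hcurve f t y - hcurve f t' y) \<le> M * sqrt \<bar>t - t'\<bar>"
  using norm_hproj_diff_le_hdist[of "f (y, t)" "f (y, t')"] bilipschitz_hdist_le[of M f "(y, t)" "(y, t')"]
  by (simp add: hcurve_def dpar_def)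

lemma second_diff_vertical_le:
  assumes bl: "bilipschitz M f" and h: "h > 0"
  shows "\<bar>second_diff (hcurve f t) x h - second_diff (hcurve f t') x h\<bar> \<le> 4 * M * sqrt \<bar>t - t'\<bar> / h"
proof -
  define \<delta> where "\<delta> y = hcurve f t y - hcurve f t' y" for y
  have \<delta>: "cmod (\<delta> y) \<le> M * sqrt \<bar>t - t'\<bar>" for y
    unfolding \<delta>_def by (rule norm_hcurve_vertical_le[OF bl])
  let ?A = "\<lambda>s. hcurve f s x + hcurve f s (x + h) - 2 * hcurve f s (x + h / 2)"
  have "?A t - ?A t' = \<delta> x + \<delta> (x + h) - 2 * \<delta> (x + h / 2)" by (simp add: \<delta>_def algebra_simps)
  then have "cmod (?A t - ?A t') = cmod (\<delta> x + \<delta> (x + h) - 2 * \<delta> (x + h / 2))" by (rule arg_cong)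
  moreover have "cmod (\<delta> x + \<delta> (x + h) - 2 * \<delta> (x + h / 2))
      \<le> cmod (\<delta> x + \<delta> (x + h)) + cmod (2 * \<delta> (x + h / 2))"
    by (rule norm_triangle_ineq4)
  moreover have "cmod (\<delta> x + \<delta> (x + h)) \<le> cmod (\<delta> x) + cmod (\<delta> (x + h))"
    by (rule norm_triangle_ineq)
  moreover have "cmod (2 * \<delta> (x + h / 2)) = 2 * cmod (\<delta> (x + h / 2))" by (simp add: norm_mult)
  ultimately have "cmod (?A t - ?A t') \<le> cmod (\<delta> x) + cmod (\<delta> (x + h)) + 2 * cmod (\<delta> (x + h / 2))"
    by linarith
  also have "\<dots> \<le> 4 * M * sqrt \<bar>t - t'\<bar>" using \<delta>[of x] \<delta>[of "x + h"] \<delta>[of "x + h / 2"] by simp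
  finally have "\<bar>cmod (?A t) - cmod (?A t')\<bar> \<le> 4 * M * sqrt \<bar>t - t'\<bar>"
    using norm_triangle_ineq3 order_trans by blast
  then show ?thesis
    using h by (simp add: second_diff_def diff_divide_distrib[symmetric] abs_divide divide_right_mono)
qed

lemma continuous_on_hcurve_time:
  assumes bl: "bilipschitz M f"
  shows "continuous_on UNIV (\<lambda>t. hcurve f t y)"
proof (intro continuous_at_imp_continuous_on ballI)
  fix t0 :: real
  have "((\<lambda>t. hcurve f t y - hcurve f t0 y) \<longlongrightarrow> 0) (at t0)"
  proof (rule Lim_null_comparison)
    show "\<forall>\<^sub>F t in at t0. norm (hcurve f t y - hcurve f t0 y) \<le> M * sqrt \<bar>t - t0\<bar>"
      using norm_hcurve_vertical_le[OF bl] by simp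
    show "((\<lambda>t. M * sqrt \<bar>t - t0\<bar>) \<longlongrightarrow> 0) (at t0)"
      by (auto intro!: tendsto_eq_intros)
  qed
  then show "isCont (\<lambda>t. hcurve f t y) t0"
    by (simp add: isCont_def LIM_zero_iff)
qed

lemma borel_measurable_second_diff_sq:
  assumes "bilipschitz M f"
  shows "(\<lambda>t. (second_diff (hcurve f t) x h)\<^sup>2 * h) \<in> borel_measurable borel"
  unfolding second_diff_def divide_inverse
  by (intro borel_measurable_continuous_onI continuous_intros continuous_on_hcurve_time[OF assms])

lemma horizontal_line_near_curve:
  assumes bl: "bilipschitz M f" and R: "R > 0"
    and flat: "\<And>y. a \<le> y \<Longrightarrow> y \<le> a + R \<Longrightarrow> cmod (hcurve f t y - chord (hcurve f t) a R y) \<le> \<eta> * R"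
  obtains L where "horizontal_line_H L"
    "\<And>y. a \<le> y \<Longrightarrow> y \<le> a + R \<Longrightarrow> hdist_set (f (y, t)) L \<le> max (\<eta> * R) (sqrt (\<eta> * M * R\<^sup>2))"
proof -
  let ?g = "hcurve f t" and ?p = "f (a, t)"
  obtain e where e: "cmod e = 1" "Im (cnj e * (?g (a + R) - ?g a)) = 0" by (rule unit_direction)
  have dev: "\<bar>Im (line_coords e ?p (f (y, t)))\<bar> \<le> \<eta> * R" if y: "a \<le> y" "y \<le> a + R" for y
  proof -
    have "line_coords e ?p (f (y, t))
        = cnj e * (?g y - chord ?g a R y) + of_real ((y - a) / R) * (cnj e * (?g (a + R) - ?g a))"
      by (simp add: line_coords_def hcurve_def chord_def algebra_simps)
    then have "Im (line_coords e ?p (f (y, t))) = Im (cnj e * (?g y - chord ?g a R y))"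
      using e(2) by simp
    also have "\<bar>\<dots>\<bar> \<le> cmod (cnj e * (?g y - chord ?g a R y))" by (rule abs_Im_le_cmod)
    also have "\<dots> \<le> \<eta> * R" using flat[OF y] by (simp add: norm_mult e)
    finally show ?thesis .
  qed
  have \<eta>R: "0 \<le> \<eta> * R" using flat[of a] R by (simp add: chord_def order_trans[OF norm_ge_zero])
  have M: "0 \<le> M" by (rule bilipschitz_nonneg[OF bl])
  show ?thesis
  proof
    show "horizontal_line_H (hline ?p e)" using e by (intro horizontal_line_hline) auto
  next
    fix y assume y: "a \<le> y" "y \<le> a + R"
    have "hdist_set (f (y, t)) (hline ?p e) \<le> hdist (f (y, t)) (line_foot e ?p (f (y, t)))"
      by (rule hdist_set_le[OF line_foot_in_hline])
    also have "\<dots> \<le> max (\<eta> * R) (sqrt (\<eta> * R * M * (y - a)))"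
      using hdist_horizontal_le[OF bl] y e dev
      by (intro hdist_line_foot_le[where \<gamma> = "\<lambda>u. f (u, t)"]) auto
    also have "\<dots> \<le> max (\<eta> * R) (sqrt (\<eta> * M * R\<^sup>2))"
      using y \<eta>R M mult_left_mono[of "y - a" R "\<eta> * R * M"]
      by (intro max.mono) (auto simp: power2_eq_square ac_simps)
    finally show "hdist_set (f (y, t)) (hline ?p e) \<le> max (\<eta> * R) (sqrt (\<eta> * M * R\<^sup>2))" .
  qed
qed

lemma ruler_coeff_le:
  assumes r: "r > 0" and \<rho>: "\<rho> > 0"
    and lines: "\<And>t. \<bar>t - ct\<bar> \<le> r\<^sup>2 \<Longrightarrow>
      \<exists>L. horizontal_line_H L \<and> (\<forall>y. \<bar>y - cy\<bar> \<le> r \<longrightarrow> hdist_set (f (y, t)) L \<le> \<rho> * r)"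
  shows "ruler_coeff f (cy, ct) r \<le> \<rho>"
proof -
  let ?S = "{\<rho>. \<rho> > 0 \<and> (\<forall>hl. horizontal_line_W hl \<longrightarrow>
      (\<exists>L. horizontal_line_H L \<and> f ` (hl \<inter> pball (cy, ct) r) \<subseteq> hnbhd L (\<rho> * r)))}"
  have "\<exists>L. horizontal_line_H L \<and> f ` (UNIV \<times> {t} \<inter> pball (cy, ct) r) \<subseteq> hnbhd L (\<rho> * r)" for t
  proof (cases "\<bar>t - ct\<bar> \<le> r\<^sup>2")
    case True
    then obtain L where L: "horizontal_line_H L" "\<And>y. \<bar>y - cy\<bar> \<le> r \<Longrightarrow> hdist_set (f (y, t)) L \<le> \<rho> * r"
      using lines by blast
    have "f ` (UNIV \<times> {t} \<inter> pball (cy, ct) r) \<subseteq> hnbhd L (\<rho> * r)"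
    proof
      fix p assume "p \<in> f ` (UNIV \<times> {t} \<inter> pball (cy, ct) r)"
      then obtain y where p: "p = f (y, t)" and "dpar (cy, ct) (y, t) \<le> r" by (auto simp: pball_def)
      then have "\<bar>y - cy\<bar> \<le> r" by (simp add: dpar_def abs_minus_commute)
      then show "p \<in> hnbhd L (\<rho> * r)" using L(2) p by (simp add: hnbhd_def)
    qed
    then show ?thesis using L(1) by blast
  next
    case False
    have "UNIV \<times> {t} \<inter> pball (cy, ct) r = {}"
    proof (rule ccontr)
      assume "UNIV \<times> {t} \<inter> pball (cy, ct) r \<noteq> {}"
      then obtain y where "dpar (cy, ct) (y, t) \<le> r" by (auto simp: pball_def)
      then have "sqrt \<bar>ct - t\<bar> \<le> r" by (simp add: dpar_def)
      then have "(sqrt \<bar>ct - t\<bar>)\<^sup>2 \<le> r\<^sup>2" by (rule power_mono) simp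
      then show False using False by (simp add: abs_minus_commute)
    qed
    moreover have "horizontal_line_H {hmult 0 (s * 1, s * 0, 0) | s. True}"
      unfolding horizontal_line_H_def by (intro exI[of _ 0] exI[of _ 1] exI[of _ 0] conjI refl) simp
    ultimately show ?thesis by blast
  qed
  then have "\<rho> \<in> ?S" using \<rho> by (auto simp: horizontal_line_W_def)
  moreover have "bdd_below ?S" by (rule bdd_belowI[of _ 0]) auto
  ultimately show ?thesis unfolding ruler_coeff_def by (rule cInf_lower)
qed

lemma large_second_diff_of_ruler_coeff_ge:
  assumes bl: "bilipschitz M f" and r: "r > 0" and \<epsilon>: "\<epsilon> > 0" and R: "R > 0"
    and cover: "a \<le> cy - r" "cy + r \<le> a + R"
    and \<theta>: "\<theta> \<ge> 0" "\<theta> + 2 * M / 2 ^ N \<le> \<eta>"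
    and small: "max (\<eta> * R) (sqrt (\<eta> * M * R\<^sup>2)) \<le> \<epsilon> / 2 * r"
    and bad: "\<epsilon> \<le> ruler_coeff f (cy, ct) r"
  shows "\<exists>t d i. \<bar>t - ct\<bar> \<le> r\<^sup>2 \<and> d < N \<and> i < 2 ^ d
    \<and> \<theta> < second_diff (hcurve f t) (a + real i * R / 2 ^ d) (R / 2 ^ d)"
proof (rule ccontr)
  assume no: "\<not> ?thesis"
  have flat: "second_diff (hcurve f t) (a + real i * R / 2 ^ d) (R / 2 ^ d) \<le> \<theta>"
    if "\<bar>t - ct\<bar> \<le> r\<^sup>2" "d < N" "i < 2 ^ d" for t d i
    using no that by (meson not_le)
  have "\<exists>L. horizontal_line_H L \<and> (\<forall>y. \<bar>y - cy\<bar> \<le> r \<longrightarrow> hdist_set (f (y, t)) L \<le> \<epsilon> / 2 * r)"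
    if t: "\<bar>t - ct\<bar> \<le> r\<^sup>2" for t
  proof -
    have "cmod (hcurve f t y - chord (hcurve f t) a R y) \<le> \<eta> * R" if "a \<le> y" "y \<le> a + R" for y
    proof -
      have "cmod (hcurve f t y - chord (hcurve f t) a R y) \<le> \<theta> * R + 2 * M * R / 2 ^ N"
        using norm_sub_chord_le[OF lipschitz_hcurve[OF bl] \<theta>(1) R flat[OF t] that] .
      also have "\<dots> = (\<theta> + 2 * M / 2 ^ N) * R" by (simp add: algebra_simps)
      also have "\<dots> \<le> \<eta> * R" using \<theta>(2) R by (intro mult_right_mono) auto
      finally show ?thesis .
    qed
    then obtain L where L: "horizontal_line_H L"
      "\<And>y. a \<le> y \<Longrightarrow> y \<le> a + R \<Longrightarrow> hdist_set (f (y, t)) L \<le> max (\<eta> * R) (sqrt (\<eta> * M * R\<^sup>2))"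
      using horizontal_line_near_curve[OF bl R] by blast
    have "hdist_set (f (y, t)) L \<le> \<epsilon> / 2 * r" if "\<bar>y - cy\<bar> \<le> r" for y
      using L(2)[of y] that cover small by (simp add: abs_le_iff)
    then show ?thesis using L(1) by blast
  qed
  then have "ruler_coeff f (cy, ct) r \<le> \<epsilon> / 2"
    using r \<epsilon> by (intro ruler_coeff_le) auto
  then show False using bad \<epsilon> by simp
qed

lemma window_integral_second_diff_ge:
  assumes bl: "bilipschitz M f" and M: "M > 0" and h: "h > 0" and \<theta>: "\<theta> > 0"
    and large: "\<theta> < second_diff (hcurve f t0) x h"
  defines "w \<equiv> (\<theta> * h / (8 * M))\<^sup>2"
  shows "ennreal (\<theta> ^ 4 * h ^ 3 / (128 * M\<^sup>2))
    \<le> (\<integral>\<^sup>+t. ennreal (indicator {t0 - w .. t0 + w} t * ((second_diff (hcurve f t) x h)\<^sup>2 * h)) \<partial>lborel)"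
proof -
  define v where "v = (\<theta> / 2)\<^sup>2 * h"
  have w: "w \<ge> 0" and v: "v \<ge> 0" using h by (simp_all add: w_def v_def)
  have "ennreal v * indicator {t0 - w .. t0 + w} t
      \<le> ennreal (indicator {t0 - w .. t0 + w} t * ((second_diff (hcurve f t) x h)\<^sup>2 * h))" for t
  proof (cases "t \<in> {t0 - w .. t0 + w}")
    case True
    have "sqrt \<bar>t - t0\<bar> \<le> sqrt w" using True by (simp add: abs_le_iff)
    also have "sqrt w = \<theta> * h / (8 * M)" using \<theta> h M by (simp add: w_def)
    finally have "4 * M * sqrt \<bar>t - t0\<bar> / h \<le> \<theta> / 2"
      using M h by (simp add: field_simps)
    then have "\<theta> / 2 \<le> second_diff (hcurve f t) x h"
      using second_diff_vertical_le[OF bl h, of t x t0] large by linarith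
    then have "(\<theta> / 2)\<^sup>2 \<le> (second_diff (hcurve f t) x h)\<^sup>2" using \<theta> by (intro power_mono) auto
    then show ?thesis using True h by (simp add: v_def ennreal_leI mult_right_mono)
  qed simp
  then have "(\<integral>\<^sup>+t. ennreal v * indicator {t0 - w .. t0 + w} t \<partial>lborel)
      \<le> (\<integral>\<^sup>+t. ennreal (indicator {t0 - w .. t0 + w} t * ((second_diff (hcurve f t) x h)\<^sup>2 * h)) \<partial>lborel)"
    by (rule nn_integral_mono)
  moreover have "(\<integral>\<^sup>+t. ennreal v * indicator {t0 - w .. t0 + w} t \<partial>lborel) = ennreal (v * (2 * w))"
    using v w by (simp add: nn_integral_cmult_indicator ennreal_mult)
  moreover have "v * (2 * w) = \<theta> ^ 4 * h ^ 3 / (128 * M\<^sup>2)"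
    using M by (simp add: v_def w_def power2_eq_square field_simps) (simp add: power_def eval_nat_numeral)
  ultimately show ?thesis by simp
qed

section \<open>Shifted dyadic grids\<close>

lemma not_three_dvd_two_power: "\<not> (3::int) dvd 2 ^ D"
proof -
  have "(2::int) ^ D mod 3 \<in> {1, 2}"
  proof (induction D)
    case (Suc D)
    have "(2::int) ^ Suc D mod 3 = (2 * ((2::int) ^ D mod 3)) mod 3" by (simp add: mod_mult_right_eq)
    with Suc show ?case by auto
  qed simp
  then show ?thesis by (auto simp: dvd_eq_mod_eq_0)
qed

lemma third_shift_far_from_grid:
  fixes R :: real
  assumes R: "R > 0"
  shows "R / 3 \<le> \<bar>2 ^ D * R / 3 + of_int p * R\<bar>"
proof -
  have "(2::int) ^ D + 3 * p \<noteq> 0"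
  proof
    assume "(2::int) ^ D + 3 * p = 0"
    then have "(2::int) ^ D = 3 * (- p)" by simp
    then have "(3::int) dvd 2 ^ D" by (rule dvdI)
    then show False using not_three_dvd_two_power by blast
  qed
  then have "(1::real) \<le> of_int \<bar>(2::int) ^ D + 3 * p\<bar>" by linarith
  also have "of_int \<bar>(2::int) ^ D + 3 * p\<bar> = \<bar>(2::real) ^ D + 3 * of_int p\<bar>" by simp
  finally have "1 * (R / 3) \<le> \<bar>(2::real) ^ D + 3 * of_int p\<bar> * (R / 3)"
    using R by (intro mult_right_mono) auto
  moreover have "2 ^ D * R / 3 + of_int p * R = ((2::real) ^ D + 3 * of_int p) * (R / 3)"
    by (simp add: algebra_simps)
  then have "\<bar>2 ^ D * R / 3 + of_int p * R\<bar> = \<bar>(2::real) ^ D + 3 * of_int p\<bar> * (R / 3)"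
    using R by (simp only: abs_mult)
  ultimately show ?thesis by simp
qed

lemma interval_in_grid_cell:
  fixes R u v :: real
  assumes R: "R > 0" and no: "\<And>p::int. \<not> (u < of_int p * R \<and> of_int p * R < v)"
  shows "\<exists>K::int. of_int K * R \<le> u \<and> v \<le> of_int (K + 1) * R"
proof (intro exI conjI)
  show "of_int \<lfloor>u / R\<rfloor> * R \<le> u" using R by (simp add: pos_le_divide_eq[symmetric])
  have "u < of_int (\<lfloor>u / R\<rfloor> + 1) * R" using R by (simp add: pos_divide_less_eq[symmetric])
  then show "v \<le> of_int (\<lfloor>u / R\<rfloor> + 1) * R" using no[of "\<lfloor>u / R\<rfloor> + 1"] by linarith
qed

lemma shifted_grid_cover:
  fixes H R u v :: real
  assumes H: "H > 0" and R: "R = H / 2 ^ D" and small: "v - u < R / 3"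
  shows "\<exists>\<sigma>::nat. \<sigma> < 2 \<and> (\<exists>K::int. of_int K * R + real \<sigma> * H / 3 \<le> u \<and> v \<le> of_int (K + 1) * R + real \<sigma> * H / 3)"
proof -
  have R0: "R > 0" and HR: "H = 2 ^ D * R" using H R by simp_all
  show ?thesis
  proof (cases "\<exists>p::int. u < of_int p * R \<and> of_int p * R < v")
    case False
    then show ?thesis using interval_in_grid_cell[OF R0] by (intro exI[of _ 0]) auto
  next
    case True
    then obtain p :: int where p: "u < of_int p * R" "of_int p * R < v" by blast
    have "\<not> (u - H / 3 < of_int q * R \<and> of_int q * R < v - H / 3)" for q :: int
    proof
      assume q: "u - H / 3 < of_int q * R \<and> of_int q * R < v - H / 3"
      have "2 ^ D * R / 3 + of_int (q - p) * R = (of_int q * R + H / 3) - of_int p * R"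
        unfolding HR by (simp add: algebra_simps)
      moreover have "\<bar>(of_int q * R + H / 3) - of_int p * R\<bar> < R / 3"
        unfolding abs_less_iff using q p small by linarith
      ultimately have "\<bar>2 ^ D * R / 3 + of_int (q - p) * R\<bar> < R / 3" by simp
      then show False using third_shift_far_from_grid[OF R0, of D "q - p"] by simp
    qed
    then obtain K :: int where "of_int K * R \<le> u - H / 3" "v - H / 3 \<le> of_int (K + 1) * R"
      using interval_in_grid_cell[OF R0] by blast
    then have "(1::nat) < 2 \<and> (\<exists>K::int. of_int K * R + real (1::nat) * H / 3 \<le> u
        \<and> v \<le> of_int (K + 1) * R + real (1::nat) * H / 3)"
      by (intro conjI exI[of _ K]) simp_all
    then show ?thesis by blast
  qed
qed

definition grid_point :: "real \<Rightarrow> nat \<Rightarrow> int \<Rightarrow> nat \<Rightarrow> nat \<Rightarrow> real" where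
  "grid_point H \<sigma> j D i = of_int j * H + real \<sigma> * H / 3 + real i * H / 2 ^ D"

lemma grid_point_reindex:
  fixes H :: real and K :: int and e d i :: nat
  assumes H: "H > 0" and i: "i < 2 ^ d"
  defines "R \<equiv> H / 2 ^ (e + 1)"
  obtains j i' where "i' < 2 ^ (e + 1 + d)"
    "of_int K * R + real \<sigma> * H / 3 + real i * R / 2 ^ d = grid_point H \<sigma> j (e + 1 + d) i'"
    "of_int j * H \<le> of_int K * R" "of_int K * R + R \<le> of_int j * H + H"
proof
  define P :: int where "P = 2 ^ (e + 1)"
  have P: "P > 0" "of_int P * R = H" by (simp_all add: P_def R_def)
  have R: "R > 0" using H by (simp add: R_def)
  define j where "j = K div P"
  define k where "k = K mod P"
  have k: "0 \<le> k" "k < P" and K: "K = j * P + k" using P by (simp_all add: j_def k_def)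
  show "nat k * 2 ^ d + i < 2 ^ (e + 1 + d)"
  proof -
    have "nat k < 2 ^ (e + 1)" using k by (simp add: P_def nat_less_iff)
    then have "nat k + 1 \<le> 2 ^ (e + 1)" by simp
    then have "(nat k + 1) * 2 ^ d \<le> 2 ^ (e + 1) * (2::nat) ^ d" by (rule mult_right_mono) simp
    then show ?thesis using i by (simp add: power_add algebra_simps)
  qed
  have KR: "of_int K * R = of_int j * H + of_int k * R" using P(2) by (simp add: K algebra_simps)
  show "of_int K * R + real \<sigma> * H / 3 + real i * R / 2 ^ d = grid_point H \<sigma> j (e + 1 + d) (nat k * 2 ^ d + i)"
    using k(1) unfolding grid_point_def KR by (simp add: R_def power_add field_simps)
  show "of_int j * H \<le> of_int K * R" using k R by (simp add: KR)
  have "of_int (k + 1) * R \<le> of_int P * R" using k R by (intro mult_right_mono) auto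
  then show "of_int K * R + R \<le> of_int j * H + H" using P(2) unfolding KR by (simp add: algebra_simps)
qed

lemma int_near_floor:
  fixes j :: int and x :: real
  assumes "of_int j \<le> x + 1 / 2" "x - 4 / 3 \<le> of_int j"
  shows "j \<in> {\<lfloor>x\<rfloor> - 2 .. \<lfloor>x\<rfloor> + 1}"
proof -
  have floor: "(of_int \<lfloor>x\<rfloor> :: real) \<le> x" "x < (of_int \<lfloor>x\<rfloor> :: real) + 1" by linarith+
  have "(of_int j :: real) < of_int (\<lfloor>x\<rfloor> + 2)" using assms floor by simp linarith
  moreover have "(of_int (\<lfloor>x\<rfloor> - 3) :: real) < of_int j" using assms floor by simp linarith
  ultimately show ?thesis by (simp only: of_int_less_iff) simp
qed

lemma sum_grouped_indicator_le:
  fixes key :: "'q \<Rightarrow> 'k" and win :: "'q \<Rightarrow> real set" and \<Psi> :: "'k \<Rightarrow> real \<Rightarrow> real"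
  assumes F: "finite F" and K: "finite K" "key ` F \<subseteq> K" and \<Psi>: "\<And>\<kappa>. \<Psi> \<kappa> t \<ge> 0"
    and overlap: "\<And>\<kappa>. (\<Sum>Q\<in>{Q\<in>F. key Q = \<kappa>}. indicator (win Q) t) \<le> n * indicator T t"
    and total: "(\<Sum>\<kappa>\<in>K. \<Psi> \<kappa> t) \<le> B" and n: "n \<ge> 0"
  shows "(\<Sum>Q\<in>F. indicator (win Q) t * \<Psi> (key Q) t) \<le> n * B * indicator T t"
proof -
  have "(\<Sum>Q\<in>F. indicator (win Q) t * \<Psi> (key Q) t)
      = (\<Sum>\<kappa>\<in>key ` F. \<Sum>Q\<in>{Q\<in>F. key Q = \<kappa>}. indicator (win Q) t * \<Psi> (key Q) t)"
    by (rule sum.image_gen[OF F])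
  also have "\<dots> = (\<Sum>\<kappa>\<in>key ` F. (\<Sum>Q\<in>{Q\<in>F. key Q = \<kappa>}. indicator (win Q) t) * \<Psi> \<kappa> t)"
    by (auto simp: sum_distrib_right intro!: sum.cong)
  also have "\<dots> \<le> (\<Sum>\<kappa>\<in>key ` F. n * indicator T t * \<Psi> \<kappa> t)"
    by (intro sum_mono mult_right_mono overlap \<Psi>)
  also have "\<dots> \<le> (\<Sum>\<kappa>\<in>K. n * indicator T t * \<Psi> \<kappa> t)"
    using K \<Psi> n by (intro sum_mono2) auto
  also have "\<dots> \<le> n * indicator T t * B"
    using total n by (simp add: sum_distrib_left[symmetric] mult_left_mono)
  finally show ?thesis by (simp add: ac_simps)
qed

lemma sum_le_by_charging:
  fixes key :: "'q \<Rightarrow> 'k" and win :: "'q \<Rightarrow> real set" and \<Psi> :: "'k \<Rightarrow> real \<Rightarrow> real"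
  assumes F: "finite F" and K: "finite K" "key ` F \<subseteq> K"
    and \<Psi>: "\<And>\<kappa> t. \<Psi> \<kappa> t \<ge> 0" "\<And>\<kappa>. \<Psi> \<kappa> \<in> borel_measurable borel"
    and win: "\<And>Q. Q \<in> F \<Longrightarrow> win Q \<in> sets borel"
    and charge: "\<And>Q. Q \<in> F \<Longrightarrow>
      ennreal (w Q) \<le> ennreal c * (\<integral>\<^sup>+t. ennreal (indicator (win Q) t * \<Psi> (key Q) t) \<partial>lborel)"
    and overlap: "\<And>\<kappa> t. (\<Sum>Q\<in>{Q\<in>F. key Q = \<kappa>}. indicator (win Q) t) \<le> n * indicator {a..b} t"
    and total: "\<And>t. (\<Sum>\<kappa>\<in>K. \<Psi> \<kappa> t) \<le> B"
    and c: "c \<ge> 0" and n: "n \<ge> 0" and ab: "a \<le> b"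
  shows "(\<Sum>Q\<in>F. ennreal (w Q)) \<le> ennreal (c * n * B * (b - a))"
proof -
  have B: "B \<ge> 0" using total[of 0] \<Psi>(1) by (meson order_trans sum_nonneg)
  have "(\<Sum>Q\<in>F. ennreal (w Q))
      \<le> ennreal c * (\<Sum>Q\<in>F. \<integral>\<^sup>+t. ennreal (indicator (win Q) t * \<Psi> (key Q) t) \<partial>lborel)"
    using charge by (simp add: sum_distrib_left sum_mono)
  also have "(\<Sum>Q\<in>F. \<integral>\<^sup>+t. ennreal (indicator (win Q) t * \<Psi> (key Q) t) \<partial>lborel)
      = (\<integral>\<^sup>+t. (\<Sum>Q\<in>F. ennreal (indicator (win Q) t * \<Psi> (key Q) t)) \<partial>lborel)"
  proof (rule nn_integral_sum[symmetric])
    fix Q assume "Q \<in> F"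
    then have "(\<lambda>t. indicator (win Q) t * \<Psi> (key Q) t) \<in> borel_measurable borel"
      using win \<Psi>(2)[of "key Q"] by measurable
    then show "(\<lambda>t. ennreal (indicator (win Q) t * \<Psi> (key Q) t)) \<in> borel_measurable lborel" by simp
  qed
  also have "\<dots> \<le> (\<integral>\<^sup>+t. ennreal (n * B) * indicator {a..b} t \<partial>lborel)"
  proof (rule nn_integral_mono)
    fix t
    have "(\<Sum>Q\<in>F. ennreal (indicator (win Q) t * \<Psi> (key Q) t))
        = ennreal (\<Sum>Q\<in>F. indicator (win Q) t * \<Psi> (key Q) t)"
      using \<Psi>(1) by (intro sum_ennreal) simp
    also have "\<dots> \<le> ennreal (n * B * indicator {a..b} t)"
      using sum_grouped_indicator_le[OF F K \<Psi>(1) overlap total n] by (rule ennreal_leI)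
    also have "\<dots> = ennreal (n * B) * indicator {a..b} t" by (simp add: indicator_def)
    finally show "(\<Sum>Q\<in>F. ennreal (indicator (win Q) t * \<Psi> (key Q) t)) \<le> ennreal (n * B) * indicator {a..b} t" .
  qed
  also have "\<dots> = ennreal (n * B * (b - a))"
    using ab n B by (simp add: nn_integral_cmult_indicator ennreal_mult)
  finally have "(\<Sum>Q\<in>F. ennreal (w Q)) \<le> ennreal c * ennreal (n * B * (b - a))"
    by (simp add: mult_left_mono)
  then show ?thesis
    using c n B ab by (simp add: ennreal_mult[symmetric] mult.assoc)
qed

section \<open>Packing of bad rectangles\<close>

text \<open>\<open>flatness\<close> is chosen so that a chord approximation within \<open>\<eta> R\<close> at scale \<open>R = 2\<^sup>m r\<close> puts
  \<open>f\<close> within \<open>\<epsilon> C r / 2\<close> of a horizontal line (\<open>flat_tolerance_le\<close>).\<close>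

definition flatness :: "real \<Rightarrow> real \<Rightarrow> real \<Rightarrow> nat \<Rightarrow> real" where
  "flatness M C \<epsilon> m = (\<epsilon> * C)\<^sup>2 / (M * 4 ^ (m + 1))"

text \<open>Charging constant, times the overlap bound, times the total energy, times the length of
  the time strip.\<close>

definition packing_const :: "real \<Rightarrow> real \<Rightarrow> real \<Rightarrow> nat \<Rightarrow> nat \<Rightarrow> real" where
  "packing_const M C \<epsilon> m N =
     8 ^ N * 128 * M\<^sup>2 / (flatness M C \<epsilon> m / 2) ^ 4
     * ((2 * 2 ^ m + 1) * (2 * (C\<^sup>2 + 4 ^ m) + 1))
     * (real N * (8 * M\<^sup>2 * 2 ^ (m + 1)))
     * (1 + 2 * (C\<^sup>2 + 4 ^ m))"

text \<open>\<open>6 C < 2\<^sup>m\<close> makes a ball of radius \<open>C l(Q)\<close> fit into a cell of side \<open>2\<^sup>m l(Q)\<close> of one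
  of the two shifted grids; \<open>N\<close> is the number of dyadic levels needed for the chord approximation.\<close>

locale packing_setup =
  fixes M C \<epsilon> :: real and m N :: nat and f :: "wpt \<Rightarrow> heis" and n0 k0 l0 :: int
  assumes M: "M \<ge> 1" and \<epsilon>: "0 < \<epsilon>" "\<epsilon> \<le> 1" and C: "C \<ge> 1"
    and m: "6 * C < 2 ^ m" and N: "4 * M < flatness M C \<epsilon> m * 2 ^ N"
    and bl: "bilipschitz M f"
begin

abbreviation "\<eta> \<equiv> flatness M C \<epsilon> m"
abbreviation "\<theta> \<equiv> \<eta> / 2"

definition "s0 = dyadic_scale n0"
definition "H = 2 ^ (m + 1) * s0"
definition "y0 = of_int k0 * s0"
definition "t0 = of_int l0 * s0\<^sup>2"
definition "root_rect = dyadic_rect n0 k0 l0"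
definition "top_cells = {\<lfloor>y0 / H\<rfloor> - 2 .. \<lfloor>y0 / H\<rfloor> + 1}"
definition "depth Q = nat (fst (dyadic_index Q) - n0)"

lemma s0_pos: "s0 > 0" and H_pos: "H > 0"
  by (simp_all add: s0_def H_def dyadic_scale_pos)

lemma flatness_pos: "\<eta> > 0"
  using M \<epsilon> C by (simp add: flatness_def)

lemma flatness_le: "\<eta> \<le> M"
proof -
  have "\<epsilon> * C \<le> C" using \<epsilon> C by (simp add: mult_left_le_one_le)
  moreover have "(2::real) ^ (m + 1) = 2 * 2 ^ m" by simp
  ultimately have "\<epsilon> * C \<le> 2 ^ (m + 1)" using m C by linarith
  then have "(\<epsilon> * C)\<^sup>2 \<le> (2 ^ (m + 1))\<^sup>2" using \<epsilon> C by (intro power_mono) auto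
  also have "\<dots> = 4 ^ (m + 1)" by (rule four_power_eq[symmetric])
  finally have "\<eta> \<le> 1 / M" using M by (simp add: flatness_def divide_le_eq field_simps)
  also have "\<dots> \<le> M" using M by (simp add: divide_le_eq power2_eq_square[symmetric] one_le_power)
  finally show ?thesis .
qed

lemma sqrt_flatness: "sqrt (\<eta> * M) * 2 ^ (m + 1) = \<epsilon> * C"
proof -
  have "\<eta> * M = (\<epsilon> * C / 2 ^ (m + 1))\<^sup>2"
    using M unfolding flatness_def four_power_eq by (simp add: power_divide)
  then show ?thesis using \<epsilon> C by simp
qed

lemma theta_plus_le_flatness: "\<theta> + 2 * M / 2 ^ N \<le> \<eta>"
  using N by (simp add: field_simps)

lemma flat_tolerance_le:
  assumes r: "r > 0"
  shows "max (\<eta> * (2 ^ m * r)) (sqrt (\<eta> * M * (2 ^ m * r)\<^sup>2)) \<le> \<epsilon> / 2 * (C * r)"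
proof -
  have "sqrt (\<eta> * M * (2 ^ m * r)\<^sup>2) = r / 2 * (sqrt (\<eta> * M) * 2 ^ (m + 1))"
    using r by (simp add: real_sqrt_mult)
  also have "\<dots> = \<epsilon> / 2 * (C * r)" unfolding sqrt_flatness by (simp add: algebra_simps)
  finally have sq: "sqrt (\<eta> * M * (2 ^ m * r)\<^sup>2) = \<epsilon> / 2 * (C * r)" .
  have "\<eta> * \<eta> \<le> \<eta> * M" using flatness_le flatness_pos by (intro mult_left_mono) auto
  then have "\<eta> \<le> sqrt (\<eta> * M)" using flatness_pos by (simp add: real_le_rsqrt power2_eq_square)
  then have "\<eta> * (2 ^ m * r) \<le> sqrt (\<eta> * M * (2 ^ m * r)\<^sup>2)"
    using r by (simp add: real_sqrt_mult mult_right_mono)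
  then show ?thesis using sq by simp
qed

lemma dyadic_subrect:
  assumes Q: "Q \<in> dyadic" and sub: "Q \<subseteq> root_rect"
  shows "side_len Q = s0 / 2 ^ depth Q" and "centre Q \<in> root_rect"
proof -
  obtain n k l where Qnkl: "Q = dyadic_rect n k l" using Q by (rule dyadicE)
  have "n0 \<le> n" using sub by (simp add: Qnkl root_rect_def dyadic_rect_subset_level)
  then show "side_len Q = s0 / 2 ^ depth Q"
    by (simp add: Qnkl depth_def s0_def dyadic_scale_diff)
  show "centre Q \<in> root_rect" using centre_in_dyadic_rect[OF Q] sub by blast
qed

lemma centre_in_root_rect_iff:
  "(cy, ct) \<in> root_rect \<longleftrightarrow> y0 \<le> cy \<and> cy < y0 + s0 \<and> t0 \<le> ct \<and> ct < t0 + s0\<^sup>2"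
  by (simp add: root_rect_def dyadic_rect_eq y0_def t0_def s0_def algebra_simps)

lemma top_cell_of_point:
  assumes \<sigma>: "\<sigma> < 2" and y: "y0 \<le> y" "y \<le> y0 + s0"
    and cell: "of_int j * H + real \<sigma> * H / 3 \<le> y" "y \<le> of_int j * H + H + real \<sigma> * H / 3"
  shows "j \<in> top_cells"
proof -
  have "s0 \<le> H / 2" using s0_pos by (simp add: H_def)
  moreover have "0 \<le> real \<sigma> * H / 3" "real \<sigma> * H / 3 \<le> H / 3" using \<sigma> H_pos by auto
  ultimately have "of_int j * H \<le> y0 + H / 2" "y0 - H / 3 \<le> of_int j * H + H"
    using y cell by linarith+
  then have "of_int j \<le> y0 / H + 1 / 2" "y0 / H - 4 / 3 \<le> of_int j"
    using H_pos by (simp_all add: field_simps)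
  then show ?thesis unfolding top_cells_def by (rule int_near_floor)
qed

text \<open>In a witness \<open>(\<sigma>, j, d, i, t)\<close>, \<open>\<sigma>\<close> selects one of the two grids and \<open>j\<close> its top cell;
  the cell of side \<open>2\<^sup>m l(Q) = H / 2 ^ (depth Q + 1)\<close> covering the ball of radius \<open>C l(Q)\<close> is then
  refined \<open>d\<close> more times.\<close>

definition witness :: "wpt set \<Rightarrow> nat \<times> int \<times> nat \<times> nat \<times> real \<Rightarrow> bool" where
  "witness Q w \<longleftrightarrow> (case w of (\<sigma>, j, d, i, t) \<Rightarrow>
     \<sigma> < 2 \<and> j \<in> top_cells \<and> d < N \<and> i < 2 ^ (depth Q + 1 + d) \<and>
     \<bar>t - snd (centre Q)\<bar> \<le> (C * side_len Q)\<^sup>2 \<and>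
     \<theta> < second_diff (hcurve f t) (grid_point H \<sigma> j (depth Q + 1 + d) i) (H / 2 ^ (depth Q + 1 + d)) \<and>
     \<bar>fst (centre Q) - grid_point H \<sigma> j (depth Q + 1 + d) i\<bar> \<le> 2 ^ m * side_len Q)"

lemma witness_exists:
  assumes bad: "Q \<in> bad_set f C \<epsilon>" and sub: "Q \<subseteq> root_rect"
  shows "\<exists>w. witness Q w"
proof -
  have Q: "Q \<in> dyadic" using bad by (simp add: bad_set_def)
  obtain cy ct where c: "centre Q = (cy, ct)" by (cases "centre Q")
  define r where "r = side_len Q"
  define R where "R = H / 2 ^ (depth Q + 1)"
  have r: "r > 0" and R: "R = 2 ^ m * r"
    using dyadic_subrect[OF Q sub] s0_pos by (simp_all add: r_def R_def H_def power_add)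
  have cy: "y0 \<le> cy" "cy \<le> y0 + s0"
    using dyadic_subrect(2)[OF Q sub] by (simp_all add: c centre_in_root_rect_iff)
  obtain \<sigma> :: nat and K :: int where \<sigma>: "\<sigma> < 2"
    and cover: "of_int K * R + real \<sigma> * H / 3 \<le> cy - C * r" "cy + C * r \<le> of_int (K + 1) * R + real \<sigma> * H / 3"
    using shifted_grid_cover[OF H_pos R_def, of "cy + C * r" "cy - C * r"] m r R by auto
  define a where "a = of_int K * R + real \<sigma> * H / 3"
  have "\<exists>t d i. \<bar>t - ct\<bar> \<le> (C * r)\<^sup>2 \<and> d < N \<and> i < 2 ^ d
      \<and> \<theta> < second_diff (hcurve f t) (a + real i * R / 2 ^ d) (R / 2 ^ d)"
  proof (rule large_second_diff_of_ruler_coeff_ge[OF bl _ \<epsilon>(1)])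
    show "max (\<eta> * R) (sqrt (\<eta> * M * R\<^sup>2)) \<le> \<epsilon> / 2 * (C * r)"
      unfolding R using flat_tolerance_le[OF r(1)] .
    show "\<epsilon> \<le> ruler_coeff f (cy, ct) (C * r)" using bad by (simp add: bad_set_def c r_def)
  qed (use cover C r R flatness_pos theta_plus_le_flatness in \<open>auto simp: a_def algebra_simps\<close>)
  then obtain t d i where t: "\<bar>t - ct\<bar> \<le> (C * r)\<^sup>2" and d: "d < N" and i: "i < 2 ^ d"
    and large: "\<theta> < second_diff (hcurve f t) (a + real i * R / 2 ^ d) (R / 2 ^ d)" by blast
  obtain j i' where i': "i' < 2 ^ (depth Q + 1 + d)"
    and x: "a + real i * R / 2 ^ d = grid_point H \<sigma> j (depth Q + 1 + d) i'"
    and j: "of_int j * H \<le> of_int K * R" "of_int K * R + R \<le> of_int j * H + H"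
    using grid_point_reindex[OF H_pos i, of "depth Q" K \<sigma>] unfolding a_def R_def by blast
  have KR: "of_int (K + 1) * R = of_int K * R + R" and Cr: "0 \<le> C * r"
    using C r by (simp_all add: algebra_simps)
  have "real i \<le> 2 ^ d" using i by (metis less_imp_le of_nat_le_iff of_nat_numeral of_nat_power)
  then have "0 \<le> real i * R / 2 ^ d" "real i * R / 2 ^ d \<le> R"
    using r R by (simp_all add: divide_le_eq mult_right_mono)
  then have "\<bar>cy - (a + real i * R / 2 ^ d)\<bar> \<le> R"
    using cover KR Cr unfolding a_def abs_le_iff by linarith
  moreover have "j \<in> top_cells"
    using j cover KR Cr by (intro top_cell_of_point[OF \<sigma> cy]) linarith+
  moreover have "R / 2 ^ d = H / 2 ^ (depth Q + 1 + d)" by (simp add: R_def power_add)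
  ultimately have "witness Q (\<sigma>, j, d, i', t)"
    using \<sigma> d i' t large x by (simp add: witness_def c r_def R)
  then show ?thesis by blast
qed

text \<open>The key forgets the time but keeps \<open>d\<close>, so that it determines the level of \<open>Q\<close>; on the
  window the second difference stays above \<open>\<theta> / 2\<close> (\<open>second_diff_vertical_le\<close>).\<close>

definition key :: "wpt set \<Rightarrow> nat \<times> int \<times> nat \<times> nat \<times> real \<Rightarrow> nat \<times> nat \<times> int \<times> nat \<times> nat" where
  "key Q w = (case w of (\<sigma>, j, d, i, t) \<Rightarrow> (d, \<sigma>, j, depth Q + 1 + d, i))"

definition window_radius :: "nat \<Rightarrow> real" where
  "window_radius D = (\<theta> * (H / 2 ^ D) / (8 * M))\<^sup>2"

definition window :: "wpt set \<Rightarrow> nat \<times> int \<times> nat \<times> nat \<times> real \<Rightarrow> real set" where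
  "window Q w = (case w of (\<sigma>, j, d, i, t) \<Rightarrow>
     {t - window_radius (depth Q + 1 + d) .. t + window_radius (depth Q + 1 + d)})"

definition energy :: "nat \<times> nat \<times> int \<times> nat \<times> nat \<Rightarrow> real \<Rightarrow> real" where
  "energy \<kappa> t = (case \<kappa> of (d, \<sigma>, j, D, i) \<Rightarrow>
     (second_diff (hcurve f t) (grid_point H \<sigma> j D i) (H / 2 ^ D))\<^sup>2 * (H / 2 ^ D))"

lemma witness_scale:
  assumes "Q \<in> dyadic" "Q \<subseteq> root_rect"
  shows "2 ^ d * (H / 2 ^ (depth Q + 1 + d)) = 2 ^ m * side_len Q"
  using dyadic_subrect(1)[OF assms] by (simp add: H_def power_add field_simps)

lemma side_cube_le_charge:
  assumes Q: "Q \<in> dyadic" "Q \<subseteq> root_rect" and w: "witness Q w"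
  shows "ennreal (side_len Q ^ 3)
    \<le> ennreal (8 ^ N * 128 * M\<^sup>2 / \<theta> ^ 4) * (\<integral>\<^sup>+t. ennreal (indicator (window Q w) t * energy (key Q w) t) \<partial>lborel)"
proof -
  obtain \<sigma> j d i t where w_eq: "w = (\<sigma>, j, d, i, t)" by (cases w) auto
  define h where "h = H / 2 ^ (depth Q + 1 + d)"
  have h: "h > 0" using H_pos by (simp add: h_def)
  have d: "d < N" and large: "\<theta> < second_diff (hcurve f t) (grid_point H \<sigma> j (depth Q + 1 + d) i) h"
    using w by (simp_all add: witness_def w_eq h_def)
  have \<theta>: "\<theta> > 0" using flatness_pos by simp
  have side: "side_len Q > 0" using dyadic_subrect(1)[OF Q] s0_pos by simp
  then have "side_len Q \<le> 2 ^ m * side_len Q" by (simp add: mult_le_cancel_right1)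
  then have "side_len Q ^ 3 \<le> (2 ^ d * h) ^ 3"
    using witness_scale[OF Q, of d] side by (intro power_mono) (simp_all add: h_def)
  also have "\<dots> = 8 ^ d * h ^ 3"
  proof -
    have "((2::real) ^ d) ^ 3 = (2 ^ 3) ^ d" by (simp only: power_mult[symmetric] mult.commute)
    then show ?thesis by (simp add: power_mult_distrib)
  qed
  also have "\<dots> \<le> 8 ^ N * h ^ 3" using d h by (intro mult_right_mono power_increasing) auto
  also have "\<dots> = (8 ^ N * 128 * M\<^sup>2 / \<theta> ^ 4) * (\<theta> ^ 4 * h ^ 3 / (128 * M\<^sup>2))"
    using \<theta> M by (simp add: field_simps)
  finally have "ennreal (side_len Q ^ 3) \<le> ennreal (8 ^ N * 128 * M\<^sup>2 / \<theta> ^ 4) * ennreal (\<theta> ^ 4 * h ^ 3 / (128 * M\<^sup>2))"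
    using \<theta> h by (simp add: ennreal_mult[symmetric] ennreal_leI)
  also have "\<dots> \<le> ennreal (8 ^ N * 128 * M\<^sup>2 / \<theta> ^ 4) * (\<integral>\<^sup>+t. ennreal (indicator (window Q w) t * energy (key Q w) t) \<partial>lborel)"
    using window_integral_second_diff_ge[OF bl _ h \<theta> large] M
    by (intro mult_left_mono) (simp_all add: window_def window_radius_def energy_def key_def w_eq h_def)
  finally show ?thesis .
qed

lemma window_near_centre:
  assumes Q: "Q \<in> dyadic" "Q \<subseteq> root_rect" and w: "witness Q w" and t: "t \<in> window Q w"
  shows "\<bar>t - snd (centre Q)\<bar> \<le> (C\<^sup>2 + 4 ^ m) * (side_len Q)\<^sup>2"
proof -
  obtain \<sigma> j d i t' where w_eq: "w = (\<sigma>, j, d, i, t')" by (cases w) auto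
  define h where "h = H / 2 ^ (depth Q + 1 + d)"
  have h0: "0 < h" using H_pos by (simp add: h_def)
  then have "h \<le> 2 ^ d * h" by (simp add: mult_le_cancel_right1)
  then have h: "0 < h" "h \<le> 2 ^ m * side_len Q"
    using witness_scale[OF Q, of d] h0 by (simp_all add: h_def)
  have "\<theta> / (8 * M) \<le> 1" using flatness_le M by simp
  then have "\<theta> / (8 * M) * h \<le> 1 * h" using h by (intro mult_right_mono) auto
  then have "\<theta> * h / (8 * M) \<le> h" by simp
  then have "window_radius (depth Q + 1 + d) \<le> (2 ^ m * side_len Q)\<^sup>2"
    unfolding window_radius_def h_def[symmetric]
    using flatness_pos M h by (intro power_mono order_trans[OF _ h(2)]) auto
  moreover have "\<bar>t' - snd (centre Q)\<bar> \<le> C\<^sup>2 * (side_len Q)\<^sup>2"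
    using w by (simp add: witness_def w_eq power_mult_distrib)
  moreover have "(2 ^ m * side_len Q)\<^sup>2 = 4 ^ m * (side_len Q)\<^sup>2"
    by (simp only: power_mult_distrib four_power_eq)
  moreover have "\<bar>t - t'\<bar> \<le> window_radius (depth Q + 1 + d)"
    using t by (simp add: window_def w_eq abs_le_iff)
  moreover have "(C\<^sup>2 + 4 ^ m) * (side_len Q)\<^sup>2 = C\<^sup>2 * (side_len Q)\<^sup>2 + 4 ^ m * (side_len Q)\<^sup>2"
    by (simp add: algebra_simps)
  ultimately show ?thesis by linarith
qed

lemma window_subset_strip:
  assumes Q: "Q \<in> dyadic" "Q \<subseteq> root_rect" and w: "witness Q w"
  shows "window Q w \<subseteq> {t0 - (C\<^sup>2 + 4 ^ m) * s0\<^sup>2 .. t0 + s0\<^sup>2 + (C\<^sup>2 + 4 ^ m) * s0\<^sup>2}"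
proof
  fix t assume t: "t \<in> window Q w"
  have "side_len Q \<le> s0" "0 \<le> side_len Q"
    using dyadic_subrect(1)[OF Q] s0_pos by (simp_all add: divide_le_eq one_le_power mult_le_cancel_left1)
  then have "(C\<^sup>2 + 4 ^ m) * (side_len Q)\<^sup>2 \<le> (C\<^sup>2 + 4 ^ m) * s0\<^sup>2"
    by (intro mult_left_mono power_mono) auto
  moreover obtain cy ct where c: "centre Q = (cy, ct)" by (cases "centre Q")
  moreover have "t0 \<le> ct" "ct < t0 + s0\<^sup>2"
    using dyadic_subrect(2)[OF Q] by (simp_all add: c centre_in_root_rect_iff)
  ultimately show "t \<in> {t0 - (C\<^sup>2 + 4 ^ m) * s0\<^sup>2 .. t0 + s0\<^sup>2 + (C\<^sup>2 + 4 ^ m) * s0\<^sup>2}"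
    using window_near_centre[OF Q w t] by (simp add: abs_le_iff)
qed

lemma overlap_le:
  assumes F: "finite F" "F \<subseteq> dyadic" and wF: "\<And>Q. Q \<in> F \<Longrightarrow> Q \<subseteq> root_rect \<and> witness Q (w Q)"
  shows "(\<Sum>Q\<in>{Q\<in>F. key Q (w Q) = \<kappa>}. indicator (window Q (w Q)) t)
    \<le> (2 * 2 ^ m + 1) * (2 * (C\<^sup>2 + 4 ^ m) + 1)
      * indicator {t0 - (C\<^sup>2 + 4 ^ m) * s0\<^sup>2 .. t0 + s0\<^sup>2 + (C\<^sup>2 + 4 ^ m) * s0\<^sup>2} t"
proof -
  let ?A = "{Q\<in>F. key Q (w Q) = \<kappa> \<and> t \<in> window Q (w Q)}"
  have "(\<Sum>Q\<in>{Q\<in>F. key Q (w Q) = \<kappa>}. indicator (window Q (w Q)) t) = (\<Sum>Q\<in>?A. 1::real)"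
    using F(1) by (intro sum.mono_neutral_cong_right) (auto simp: indicator_def)
  also have "\<dots> = real (card ?A)" by simp
  finally have sum_eq: "(\<Sum>Q\<in>{Q\<in>F. key Q (w Q) = \<kappa>}. indicator (window Q (w Q)) t) = real (card ?A)" .
  obtain d \<sigma> j D i where \<kappa>: "\<kappa> = (d, \<sigma>, j, D, i)" by (cases \<kappa>) auto
  define S where "S = {Q \<in> dyadic. side_len Q = dyadic_scale (n0 + int (D - 1 - d))
      \<and> \<bar>fst (centre Q) - grid_point H \<sigma> j D i\<bar> \<le> 2 ^ m * dyadic_scale (n0 + int (D - 1 - d))
      \<and> \<bar>snd (centre Q) - t\<bar> \<le> (C\<^sup>2 + 4 ^ m) * (dyadic_scale (n0 + int (D - 1 - d)))\<^sup>2}"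
  have "?A \<subseteq> S"
  proof
    fix Q assume "Q \<in> ?A"
    then have Q: "Q \<in> dyadic" "Q \<subseteq> root_rect" and w: "witness Q (w Q)" and k: "key Q (w Q) = \<kappa>"
      and t: "t \<in> window Q (w Q)" using F(2) wF by auto
    obtain \<sigma>' j' d' i' t' where w_eq: "w Q = (\<sigma>', j', d', i', t')" by (cases "w Q") auto
    have eq: "d' = d" "\<sigma>' = \<sigma>" "j' = j" "depth Q + 1 + d' = D" "i' = i" using k by (simp_all add: key_def w_eq \<kappa>)
    have "depth Q = D - 1 - d" using eq by arith
    then have side: "side_len Q = dyadic_scale (n0 + int (D - 1 - d))"
      using dyadic_subrect(1)[OF Q] dyadic_scale_diff[of n0 "n0 + int (D - 1 - d)"] by (simp add: s0_def)
    show "Q \<in> S"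
      using w window_near_centre[OF Q w t] Q(1) side eq
      by (simp add: S_def witness_def w_eq abs_minus_commute)
  qed
  moreover have "finite S \<and> real (card S) \<le> (2 * 2 ^ m + 1) * (2 * (C\<^sup>2 + 4 ^ m) + 1)"
    unfolding S_def by (rule finite_card_dyadic_rects_near) auto
  ultimately have bound: "real (card ?A) \<le> (2 * 2 ^ m + 1) * (2 * (C\<^sup>2 + 4 ^ m) + 1)"
    by (meson card_mono of_nat_le_iff order_trans)
  let ?T = "{t0 - (C\<^sup>2 + 4 ^ m) * s0\<^sup>2 .. t0 + s0\<^sup>2 + (C\<^sup>2 + 4 ^ m) * s0\<^sup>2}"
  show ?thesis
  proof (cases "t \<in> ?T")
    case False
    have "?A = {}" using False window_subset_strip F(2) wF by blast
    then show ?thesis using False unfolding sum_eq by (simp only: card.empty) simp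
  qed (use bound sum_eq in simp)
qed

definition key_space :: "nat \<Rightarrow> (nat \<times> nat \<times> int \<times> nat \<times> nat) set" where
  "key_space Dm = {..<N} \<times> {..<2} \<times> top_cells \<times> (SIGMA D:{..<Dm}. {..<2 ^ D})"

lemma finite_key_space: "finite (key_space Dm)"
  by (simp add: key_space_def top_cells_def finite_SigmaI)

lemma energy_total_le: "(\<Sum>\<kappa>\<in>key_space Dm. energy \<kappa> t) \<le> real N * (8 * M\<^sup>2 * H)"
proof -
  have cell: "(\<Sum>Di\<in>(SIGMA D:{..<Dm}. {..<2 ^ D}). energy (d, \<sigma>, j, Di) t) \<le> M\<^sup>2 * H" for d \<sigma> j
  proof -
    have "(\<Sum>Di\<in>(SIGMA D:{..<Dm}. {..<2 ^ D}). energy (d, \<sigma>, j, Di) t)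
        = (\<Sum>D<Dm. \<Sum>i<2 ^ D. (second_diff (hcurve f t) (of_int j * H + real \<sigma> * H / 3 + real i * H / 2 ^ D)
            (H / 2 ^ D))\<^sup>2 * (H / 2 ^ D))"
      by (simp add: sum.Sigma energy_def grid_point_def)
    also have "\<dots> \<le> M\<^sup>2 * H" by (rule sum_second_diff_sq_le[OF lipschitz_hcurve[OF bl] H_pos])
    finally show ?thesis .
  qed
  have "(\<Sum>\<kappa>\<in>key_space Dm. energy \<kappa> t)
      = (\<Sum>d<N. \<Sum>\<sigma><2. \<Sum>j\<in>top_cells. \<Sum>Di\<in>(SIGMA D:{..<Dm}. {..<2 ^ D}). energy (d, \<sigma>, j, Di) t)"
    by (simp add: key_space_def sum.cartesian_product top_cells_def)
  also have "\<dots> \<le> (\<Sum>d<N. \<Sum>\<sigma><(2::nat). \<Sum>j\<in>top_cells. M\<^sup>2 * H)"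
    by (intro sum_mono cell)
  also have "\<dots> = real N * (8 * M\<^sup>2 * H)" by (simp add: top_cells_def)
  finally show ?thesis .
qed

lemma energy_nonneg: "0 \<le> energy \<kappa> t"
  using H_pos by (simp add: energy_def split: prod.splits)

lemma borel_measurable_energy: "energy \<kappa> \<in> borel_measurable borel"
proof -
  obtain d \<sigma> j D i where \<kappa>: "\<kappa> = (d, \<sigma>, j, D, i)" by (cases \<kappa>) auto
  have "energy \<kappa> = (\<lambda>t. (second_diff (hcurve f t) (grid_point H \<sigma> j D i) (H / 2 ^ D))\<^sup>2 * (H / 2 ^ D))"
    by (simp add: fun_eq_iff energy_def \<kappa>)
  then show ?thesis by (simp only:) (rule borel_measurable_second_diff_sq[OF bl])
qed

lemma sum_side_cube_le:
  assumes F: "finite F" "F \<subseteq> {Q \<in> bad_set f C \<epsilon>. Q \<subseteq> root_rect}"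
  shows "(\<Sum>Q\<in>F. ennreal (side_len Q ^ 3)) \<le> ennreal (packing_const M C \<epsilon> m N * s0 ^ 3)"
proof -
  have FD: "F \<subseteq> dyadic" using F(2) by (auto simp: bad_set_def)
  obtain w where w: "\<forall>Q\<in>F. witness Q (w Q)"
    using bchoice[of F "\<lambda>Q w. witness Q w"] witness_exists F(2) by blast
  define Dm where "Dm = Max (depth ` F) + 1 + N"
  have "key Q (w Q) \<in> key_space Dm" if "Q \<in> F" for Q
  proof -
    have "depth Q \<le> Max (depth ` F)" using F(1) that by simp
    then show ?thesis using w that by (auto simp: key_space_def Dm_def key_def witness_def split: prod.splits)
  qed
  then have keys: "(\<lambda>Q. key Q (w Q)) ` F \<subseteq> key_space Dm" by blast
  have "(\<Sum>Q\<in>F. ennreal (side_len Q ^ 3))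
      \<le> ennreal (8 ^ N * 128 * M\<^sup>2 / \<theta> ^ 4 * ((2 * 2 ^ m + 1) * (2 * (C\<^sup>2 + 4 ^ m) + 1))
          * (real N * (8 * M\<^sup>2 * H)) * ((t0 + s0\<^sup>2 + (C\<^sup>2 + 4 ^ m) * s0\<^sup>2) - (t0 - (C\<^sup>2 + 4 ^ m) * s0\<^sup>2)))"
  proof (rule sum_le_by_charging[where \<Psi> = energy and win = "\<lambda>Q. window Q (w Q)"])
    show "ennreal (side_len Q ^ 3) \<le> ennreal (8 ^ N * 128 * M\<^sup>2 / \<theta> ^ 4)
        * (\<integral>\<^sup>+t. ennreal (indicator (window Q (w Q)) t * energy (key Q (w Q)) t) \<partial>lborel)" if "Q \<in> F" for Q
      using side_cube_le_charge that FD F(2) w by blast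
    show "(\<Sum>Q\<in>{Q\<in>F. key Q (w Q) = \<kappa>}. indicator (window Q (w Q)) t)
        \<le> (2 * 2 ^ m + 1) * (2 * (C\<^sup>2 + 4 ^ m) + 1)
          * indicator {t0 - (C\<^sup>2 + 4 ^ m) * s0\<^sup>2 .. t0 + s0\<^sup>2 + (C\<^sup>2 + 4 ^ m) * s0\<^sup>2} t" for \<kappa> t
      using overlap_le[OF F(1) FD] F(2) w by blast
  qed (use F(1) finite_key_space keys energy_total_le energy_nonneg borel_measurable_energy s0_pos
       in \<open>auto simp: window_def split: prod.splits\<close>)
  also have "\<dots> = ennreal (packing_const M C \<epsilon> m N * s0 ^ 3)"
    by (simp add: packing_const_def H_def power2_eq_square power3_eq_cube algebra_simps)
  finally show ?thesis .
qed

end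

theorem proposition4p3:
  fixes M C \<epsilon> :: real
  assumes "M \<ge> 1" and "0 < \<epsilon>" and "\<epsilon> \<le> 1" and "C \<ge> 1"
  shows "\<exists>C'. \<forall>f. bilipschitz M f \<longrightarrow>
           (\<forall>Q0\<in>dyadic.
              (\<Sum>\<^sub>\<infinity>Q\<in>{Q \<in> bad_set f C \<epsilon>. Q \<subseteq> Q0}. ennreal (side_len Q ^ 3))
                \<le> ennreal (C' * side_len Q0 ^ 3))"
proof -
  obtain m :: nat where m: "6 * C < 2 ^ m" using real_arch_pow[of 2 "6 * C"] by auto
  have "flatness M C \<epsilon> m > 0" using assms by (simp add: flatness_def)
  moreover obtain N :: nat where "4 * M / flatness M C \<epsilon> m < 2 ^ N"
    using real_arch_pow[of 2 "4 * M / flatness M C \<epsilon> m"] by auto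
  ultimately have N: "4 * M < flatness M C \<epsilon> m * 2 ^ N" by (simp add: divide_less_eq mult.commute)
  show ?thesis
  proof (intro exI[of _ "packing_const M C \<epsilon> m N"] allI impI ballI)
    fix f Q0 assume bl: "bilipschitz M f" and "Q0 \<in> dyadic"
    then obtain n0 k0 l0 where Q0: "Q0 = dyadic_rect n0 k0 l0" by (auto elim: dyadicE)
    interpret packing_setup M C \<epsilon> m N f n0 k0 l0
      using assms m N bl by unfold_locales auto
    show "(\<Sum>\<^sub>\<infinity>Q\<in>{Q \<in> bad_set f C \<epsilon>. Q \<subseteq> Q0}. ennreal (side_len Q ^ 3))
        \<le> ennreal (packing_const M C \<epsilon> m N * side_len Q0 ^ 3)"
    proof (rule infsum_le_finite_sums)
      show "(\<lambda>Q. ennreal (side_len Q ^ 3)) summable_on {Q \<in> bad_set f C \<epsilon>. Q \<subseteq> Q0}"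
        by (rule nonneg_summable_on_complete) simp
      show "sum (\<lambda>Q. ennreal (side_len Q ^ 3)) F \<le> ennreal (packing_const M C \<epsilon> m N * side_len Q0 ^ 3)"
        if "finite F" "F \<subseteq> {Q \<in> bad_set f C \<epsilon>. Q \<subseteq> Q0}" for F
        using sum_side_cube_le[OF that(1)] that(2) unfolding root_rect_def Q0[symmetric]
        by (simp add: Q0 s0_def)
    qed
  qed
qed

end
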